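(* Let $m\in\mathbb{N}$ and $\rho\in[2,m-1]$. Then $$t_\rho(\mathbb{Z}_m)=\left\lfloor\frac{m-2}{\rho-1}\right\rfloor+1,\qquad s_\rho(\mathbb{Z}_m)=\max\left\{\frac md\left(\left\lfloor\frac{d-2}{\rho-1}\right\rfloor+1\right): d\mid m,\ d\ge\rho+1\right\}.$$
   Context: Groups are written additively; $\mathbb{Z}_m=\mathbb{Z}/m\mathbb{Z}$. For $A\subseteq G$ let $A_0:=A\cup\{0\}$ and $\langle A\rangle^+_\rho:=\rho A_0=\{a_1+\dots+a_\rho:a_i\in A_0\}$. $\operatorname{diam}^+_A(G):=\min\{\rho\in\mathbb{N}_0:\langle A\rangle^+_\rho=G\}$ ($\min\varnothing=\infty$). The period of $S\subseteq G$ is $\pi(S):=\{g\in G:S+g=S\}$; $S$ is aperiodic if $\pi(S)=\{0\}$. A subset $A\subseteq G$ is $\rho$-maximal if it is maximal under inclusion subject to $\operatorname{diam}^+_A(G)\ge\rho$, i.e. subject to $\langle A\rangle^+_{\rho-1}\neq G$. With the convention $\max\varnothing=0$: $s_\rho(G):=\max\{|A|: A\subseteq G,\ \rho\le\operatorname{diam}^+_A(G)<\infty\}$ and $t_\rho(G):=\max\{|A|: A \text{ is an aperiodic } \rho\text{-maximal generating set for } G\}$. *)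

theory Defs
  imports Main "HOL-Library.Extended_Nat"
begin

text \<open>The cyclic group Z_m is modelled by the carrier {0..<m} of naturals with
addition modulo m.\<close>

definition Zm :: "nat \<Rightarrow> nat set" where
  "Zm m = {0..<m}"

fun sumset_rho :: "nat \<Rightarrow> nat set \<Rightarrow> nat \<Rightarrow> nat set" where
  "sumset_rho m A 0 = {0 mod m}"
| "sumset_rho m A (Suc r) = {(x + a) mod m | x a. x \<in> sumset_rho m A r \<and> a \<in> insert 0 A}"

definition diam :: "nat \<Rightarrow> nat set \<Rightarrow> enat" where
  "diam m A = (if \<exists>r. sumset_rho m A r = Zm m
               then enat (LEAST r. sumset_rho m A r = Zm m) else \<infinity>)"

definition period :: "nat \<Rightarrow> nat set \<Rightarrow> nat set" where
  "period m S = {g \<in> Zm m. (\<lambda>x. (x + g) mod m) ` S = S}"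

definition aperiodic :: "nat \<Rightarrow> nat set \<Rightarrow> bool" where
  "aperiodic m S \<longleftrightarrow> period m S = {0}"

definition rho_maximal :: "nat \<Rightarrow> nat \<Rightarrow> nat set \<Rightarrow> bool" where
  "rho_maximal m \<rho> A \<longleftrightarrow> A \<subseteq> Zm m \<and> enat \<rho> \<le> diam m A \<and>
     (\<forall>B. A \<subset> B \<and> B \<subseteq> Zm m \<longrightarrow> \<not> (enat \<rho> \<le> diam m B))"

definition generates :: "nat \<Rightarrow> nat set \<Rightarrow> bool" where
  "generates m A \<longleftrightarrow> A \<subseteq> Zm m \<and>
     (\<forall>H. H \<subseteq> Zm m \<and> 0 \<in> H \<and> (\<forall>x\<in>H. \<forall>y\<in>H. (x + y) mod m \<in> H)
          \<and> (\<forall>x\<in>H. (m - x) mod m \<in> H) \<and> A \<subseteq> H \<longrightarrow> H = Zm m)"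

text \<open>max over the empty set is 0 (cardinalities are \<ge> 0, so insert 0).\<close>
definition s_rho :: "nat \<Rightarrow> nat \<Rightarrow> nat" where
  "s_rho \<rho> m = Max (insert 0 {card A | A. A \<subseteq> Zm m \<and> enat \<rho> \<le> diam m A \<and> diam m A < \<infinity>})"

definition t_rho :: "nat \<Rightarrow> nat \<Rightarrow> nat" where
  "t_rho \<rho> m = Max (insert 0 {card A | A. A \<subseteq> Zm m \<and> aperiodic m A \<and> rho_maximal m \<rho> A
                                          \<and> generates m A})"

end

theory Submission
  imports Defs
begin

text \<open>
  Both upper bounds come from Kneser's theorem, which we prove first for finite
  nonempty subsets of an arbitrary abelian group (class ab_group_add):
  |A + H| + |B + H| <= |A + B| + |H| where H is the stabilizer of A + B.
  The proof is the classical one: induction on |A + B|, an inner induction on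
  min(|A|, |B|) replacing (A, B) by (A n (g + B), A u (g + B)), and Kemperman's
  extension argument when that sumset shrinks.  Iterating the theorem gives h |X + H| <= |hX| + (h - 1) |H| for H the stabilizer of hX.
  To apply this to the model of Z_m in Defs (residues with addition mod m) we
  embed Z_m into the group Q/Z, realised as a quotient type, via n |-> n/m; the
  embedding turns the sets rho A_0 into iterated sumsets.  If (rho-1) A_0 is not
  all of Z_m and H is its stabilizer, then |H| divides m and, writing
  |A_0 + H| = c |H| and m = d |H|, we get (rho - 1)(c - 1) + 2 <= d.  For an
  aperiodic rho-maximal set, maximality gives A + H = A and aperiodicity H = 0,
  which yields the bound on t_rho; in general d is a divisor of m with d >= rho + 1
  and |A| <= c |H|, which yields the bound on s_rho.

  The matching lower bounds are explicit: the interval {0..k}, k = (m-2) div (rho-1),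
  is an aperiodic rho-maximal generating set, and {x : x mod d <= (d-2) div (rho-1)}
  has finite diameter at least rho.
\<close>

section \<open>Sumsets, stabilizers and cosets in abelian groups\<close>

definition sumset :: "'a::ab_group_add set \<Rightarrow> 'a set \<Rightarrow> 'a set" (infixl "\<oplus>" 65)
  where "A \<oplus> B = {a + b | a b. a \<in> A \<and> b \<in> B}"

definition stabilizer :: "'a::ab_group_add set \<Rightarrow> 'a set"
  where "stabilizer S = {g. (+) g ` S = S}"

definition is_subgroup :: "'a::ab_group_add set \<Rightarrow> bool"
  where "is_subgroup H \<longleftrightarrow> 0 \<in> H \<and> (\<forall>x\<in>H. \<forall>y\<in>H. x + y \<in> H) \<and> (\<forall>x\<in>H. - x \<in> H)"

definition coset :: "'a::ab_group_add \<Rightarrow> 'a set \<Rightarrow> 'a set"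
  where "coset x H = (+) x ` H"

lemma sumset_iff: "z \<in> A \<oplus> B \<longleftrightarrow> (\<exists>a\<in>A. \<exists>b\<in>B. z = a + b)"
  unfolding sumset_def by blast

lemma sumset_I[intro]: "a \<in> A \<Longrightarrow> b \<in> B \<Longrightarrow> a + b \<in> A \<oplus> B"
  unfolding sumset_def by blast

lemma sumset_E[elim]: "z \<in> A \<oplus> B \<Longrightarrow> (\<And>a b. a \<in> A \<Longrightarrow> b \<in> B \<Longrightarrow> z = a + b \<Longrightarrow> P) \<Longrightarrow> P"
  unfolding sumset_def by blast

lemma sumset_image: "A \<oplus> B = (\<lambda>(a,b). a + b) ` (A \<times> B)"
  unfolding sumset_def by auto

lemma sumset_finite[simp]: "finite A \<Longrightarrow> finite B \<Longrightarrow> finite (A \<oplus> B)"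
  unfolding sumset_image by simp

lemma sumset_empty[simp]: "A \<oplus> {} = {}" "{} \<oplus> B = {}"
  unfolding sumset_def by auto

lemma sumset_ne: "A \<noteq> {} \<Longrightarrow> B \<noteq> {} \<Longrightarrow> A \<oplus> B \<noteq> {}"
  unfolding sumset_def by blast

lemma sumset_comm_sub: "A \<oplus> B \<subseteq> B \<oplus> A"
proof
  fix z assume "z \<in> A \<oplus> B"
  then obtain a b where "a \<in> A" "b \<in> B" "z = a + b" by blast
  thus "z \<in> B \<oplus> A" using sumset_I[of b B a A] by (simp add: add.commute)
qed

lemma sumset_comm: "A \<oplus> B = B \<oplus> A"
  using sumset_comm_sub by blast

lemma sumset_assoc: "(A \<oplus> B) \<oplus> C = A \<oplus> (B \<oplus> C)"
proof
  show "(A \<oplus> B) \<oplus> C \<subseteq> A \<oplus> (B \<oplus> C)"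
  proof
    fix z assume "z \<in> (A \<oplus> B) \<oplus> C"
    then obtain u c a b where "u \<in> A \<oplus> B" "c \<in> C" "z = u + c" "a \<in> A" "b \<in> B" "u = a + b" by blast
    thus "z \<in> A \<oplus> (B \<oplus> C)" using sumset_I[of a A "b + c" "B \<oplus> C"] sumset_I[of b B c C] by (simp add: add.assoc)
  qed
  show "A \<oplus> (B \<oplus> C) \<subseteq> (A \<oplus> B) \<oplus> C"
  proof
    fix z assume "z \<in> A \<oplus> (B \<oplus> C)"
    then obtain a u b c where "a \<in> A" "u \<in> B \<oplus> C" "z = a + u" "b \<in> B" "c \<in> C" "u = b + c" by blast
    thus "z \<in> (A \<oplus> B) \<oplus> C" using sumset_I[of "a + b" "A \<oplus> B" c C] sumset_I[of a A b B] by (simp add: add.assoc)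
  qed
qed

lemma sumset_swap: "(A \<oplus> B) \<oplus> (C \<oplus> D) = (A \<oplus> C) \<oplus> (B \<oplus> D)"
proof -
  have "(A \<oplus> B) \<oplus> (C \<oplus> D) = A \<oplus> (B \<oplus> (C \<oplus> D))" by (rule sumset_assoc)
  also have "B \<oplus> (C \<oplus> D) = (B \<oplus> C) \<oplus> D" by (rule sumset_assoc[symmetric])
  also have "B \<oplus> C = C \<oplus> B" by (rule sumset_comm)
  also have "(C \<oplus> B) \<oplus> D = C \<oplus> (B \<oplus> D)" by (rule sumset_assoc)
  also have "A \<oplus> (C \<oplus> (B \<oplus> D)) = (A \<oplus> C) \<oplus> (B \<oplus> D)" by (rule sumset_assoc[symmetric])
  finally show ?thesis .
qed

lemma sumset_mono: "A \<subseteq> A' \<Longrightarrow> B \<subseteq> B' \<Longrightarrow> A \<oplus> B \<subseteq> A' \<oplus> B'"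
  unfolding sumset_def by blast

lemma sumset_Un_left: "(A \<union> A') \<oplus> B = (A \<oplus> B) \<union> (A' \<oplus> B)"
  unfolding sumset_def by blast

lemma sumset_zero[simp]: "{0} \<oplus> B = B" "B \<oplus> {0} = B"
  unfolding sumset_def by auto

lemma sumset_single: "{x} \<oplus> B = (+) x ` B"
  unfolding sumset_def by auto

lemma sumset_translate_right: "A \<oplus> ((+) g ` B) = (+) g ` (A \<oplus> B)"
proof -
  have "(+) g ` B = {g} \<oplus> B" by (simp add: sumset_single)
  moreover have "(+) g ` (A \<oplus> B) = {g} \<oplus> (A \<oplus> B)" by (simp add: sumset_single)
  ultimately show ?thesis by (metis sumset_assoc sumset_comm)
qed

lemma sumset_translate_left: "((+) g ` A) \<oplus> B = (+) g ` (A \<oplus> B)"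
  by (metis sumset_comm sumset_translate_right)

lemma translate_subset_eq: "finite (S::'a::ab_group_add set) \<Longrightarrow> (+) g ` S \<subseteq> S \<Longrightarrow> (+) g ` S = S"
proof -
  assume f: "finite S" and s: "(+) g ` S \<subseteq> S"
  have "card ((+) g ` S) = card S" by (rule card_image) (simp add: inj_on_def)
  thus ?thesis using card_subset_eq[OF f s] by simp
qed

lemma stabilizer_mem: "g \<in> stabilizer S \<Longrightarrow> x \<in> S \<Longrightarrow> g + x \<in> S"
  unfolding stabilizer_def by blast

lemma stabilizer_I: "finite S \<Longrightarrow> (\<And>x. x \<in> S \<Longrightarrow> g + x \<in> S) \<Longrightarrow> g \<in> stabilizer S"
  unfolding stabilizer_def using translate_subset_eq by blast

lemma stabilizer_zero[simp]: "0 \<in> stabilizer S"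
  unfolding stabilizer_def by simp

lemma stabilizer_add: "g \<in> stabilizer S \<Longrightarrow> h \<in> stabilizer S \<Longrightarrow> g + h \<in> stabilizer S"
proof -
  assume g: "g \<in> stabilizer S" and h: "h \<in> stabilizer S"
  have "(+) (g + h) ` S = (+) g ` ((+) h ` S)" by (auto simp: image_image add.assoc)
  thus ?thesis using g h unfolding stabilizer_def by simp
qed

lemma stabilizer_neg: "g \<in> stabilizer S \<Longrightarrow> - g \<in> stabilizer S"
proof -
  assume g: "g \<in> stabilizer S"
  have "(+) (- g) ` S = (+) (- g) ` ((+) g ` S)" using g unfolding stabilizer_def by simp
  also have "\<dots> = S" by (simp add: image_image)
  finally show ?thesis unfolding stabilizer_def by simp
qed

lemma subgroup_stabilizer: "is_subgroup (stabilizer S)"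
  unfolding is_subgroup_def using stabilizer_add stabilizer_neg by auto

lemma stabilizer_sub: "s \<in> S \<Longrightarrow> stabilizer S \<subseteq> (\<lambda>x. x - s) ` S"
proof
  fix g assume s: "s \<in> S" and g: "g \<in> stabilizer S"
  have "g + s \<in> S" using stabilizer_mem[OF g s] .
  thus "g \<in> (\<lambda>x. x - s) ` S" by (metis add_diff_cancel image_eqI)
qed

lemma stabilizer_finite: "finite S \<Longrightarrow> S \<noteq> {} \<Longrightarrow> finite (stabilizer S)"
  using stabilizer_sub by (meson equals0I finite_imageI finite_subset)

lemma stabilizer_translate: "stabilizer ((+) g ` S) = stabilizer S"
proof -
  have "(+) h ` ((+) g ` S) = (+) g ` ((+) h ` S)" for h by (auto simp: image_image add_ac)
  moreover have "inj ((+) g)" by (simp add: inj_def)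
  ultimately show ?thesis unfolding stabilizer_def by (auto simp: inj_image_eq_iff)
qed

lemma subgroup_sumset_self: "is_subgroup H \<Longrightarrow> H \<oplus> H = H"
  unfolding is_subgroup_def sumset_def by force

lemma sumset_subgroup_sup: "is_subgroup H \<Longrightarrow> X \<subseteq> X \<oplus> H"
  unfolding is_subgroup_def sumset_def by force

lemma sumset_subgroup_idem: "is_subgroup H \<Longrightarrow> (X \<oplus> H) \<oplus> H = X \<oplus> H"
  by (simp add: subgroup_sumset_self sumset_assoc)

lemma sumset_stabilizer_self: "S \<oplus> stabilizer S = S"
proof
  show "S \<oplus> stabilizer S \<subseteq> S"
    by (auto simp: sumset_iff) (metis add.commute stabilizer_mem)
  show "S \<subseteq> S \<oplus> stabilizer S" using sumset_subgroup_sup[OF subgroup_stabilizer] .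
qed

lemma periodic_iff: "is_subgroup H \<Longrightarrow> finite S \<Longrightarrow> S \<oplus> H = S \<longleftrightarrow> H \<subseteq> stabilizer S"
proof
  assume H: "is_subgroup H" and f: "finite S"
  { assume e: "S \<oplus> H = S"
    show "H \<subseteq> stabilizer S"
    proof
      fix h assume "h \<in> H"
      hence "h + x \<in> S" if "x \<in> S" for x using e that by (metis add.commute sumset_I)
      thus "h \<in> stabilizer S" using stabilizer_I[OF f] by blast
    qed }
  { assume e: "H \<subseteq> stabilizer S"
    have "S \<oplus> H \<subseteq> S" using e by (auto simp: sumset_iff) (metis add.commute stabilizer_mem subsetD)
    thus "S \<oplus> H = S" using sumset_subgroup_sup[OF H] by blast }
qed

lemma stabilizer_sumset_mono: "stabilizer P \<subseteq> stabilizer (P \<oplus> Q)"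
proof
  fix g assume "g \<in> stabilizer P"
  hence "(+) g ` (P \<oplus> Q) = P \<oplus> Q" using sumset_translate_left[of g P Q] unfolding stabilizer_def by simp
  thus "g \<in> stabilizer (P \<oplus> Q)" unfolding stabilizer_def by simp
qed

lemma subgroup_sub_stabilizer_sumset: "is_subgroup H \<Longrightarrow> H \<subseteq> stabilizer (X \<oplus> H)"
proof
  fix h assume H: "is_subgroup H" and h: "h \<in> H"
  have "(+) h ` (X \<oplus> H) = X \<oplus> ((+) h ` H)" by (simp add: sumset_translate_right)
  also have "(+) h ` H = H"
  proof
    show "(+) h ` H \<subseteq> H" using H h unfolding is_subgroup_def by auto
    show "H \<subseteq> (+) h ` H"
    proof
      fix y assume "y \<in> H"
      hence "y - h \<in> H" using H h unfolding is_subgroup_def by (metis diff_conv_add_uminus)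
      thus "y \<in> (+) h ` H" by (metis add_diff_cancel_left' diff_add_cancel image_eqI add.commute)
    qed
  qed
  finally show "h \<in> stabilizer (X \<oplus> H)" unfolding stabilizer_def by simp
qed

lemma coset_iff: "is_subgroup H \<Longrightarrow> y \<in> coset x H \<longleftrightarrow> y - x \<in> H"
  unfolding coset_def by (auto simp: image_iff) (metis add_diff_cancel_left' diff_add_cancel add.commute)

lemma coset_card: "card (coset x H) = card H"
  unfolding coset_def by (simp add: card_image)

lemma coset_self: "is_subgroup H \<Longrightarrow> x \<in> coset x H"
  using coset_iff by (metis diff_self is_subgroup_def)

lemma coset_eq: "is_subgroup H \<Longrightarrow> y \<in> coset x H \<Longrightarrow> coset y H = coset x H"
proof -
  assume H: "is_subgroup H" and y: "y \<in> coset x H"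
  have yx: "y - x \<in> H" using coset_iff[OF H] y by blast
  have "z - y \<in> H \<longleftrightarrow> z - x \<in> H" for z
  proof
    assume "z - y \<in> H" thus "z - x \<in> H" using yx H unfolding is_subgroup_def
      by (metis diff_add_cancel add_diff_eq diff_diff_eq2 add.commute)
  next
    assume zx: "z - x \<in> H"
    have "-(y - x) \<in> H" using yx H unfolding is_subgroup_def by blast
    hence "(z - x) + (-(y - x)) \<in> H" using zx H unfolding is_subgroup_def by blast
    thus "z - y \<in> H" by (simp add: algebra_simps)
  qed
  thus ?thesis using coset_iff[OF H] by blast
qed

lemma coset_disj: "is_subgroup H \<Longrightarrow> coset x H \<noteq> coset y H \<Longrightarrow> coset x H \<inter> coset y H = {}"
  by (metis coset_eq disjoint_iff)

lemma periodic_coset: "is_subgroup H \<Longrightarrow> X \<oplus> H = X \<Longrightarrow> x \<in> X \<Longrightarrow> coset x H \<subseteq> X"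
proof
  fix y assume e: "X \<oplus> H = X" and x: "x \<in> X" and y: "y \<in> coset x H"
  then obtain h where "h \<in> H" "y = x + h" unfolding coset_def by auto
  thus "y \<in> X" using sumset_I[of x X h H] e x by auto
qed

lemma stabilizer_in_coset: "is_subgroup H \<Longrightarrow> P \<subseteq> coset z H \<Longrightarrow> P \<noteq> {} \<Longrightarrow> stabilizer P \<subseteq> H"
proof
  fix g assume H: "is_subgroup H" and P: "P \<subseteq> coset z H" "P \<noteq> {}" and g: "g \<in> stabilizer P"
  obtain p where p: "p \<in> P" using P by blast
  have "g + p \<in> P" using stabilizer_mem[OF g p] .
  hence "g + p - z \<in> H" "p - z \<in> H" using P p coset_iff[OF H] by blast+
  hence "(g + p - z) + (-(p - z)) \<in> H" using H unfolding is_subgroup_def by blast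
  thus "g \<in> H" by (simp add: algebra_simps)
qed

lemma subgroup_closed: "is_subgroup G \<Longrightarrow> X \<subseteq> G \<Longrightarrow> Y \<subseteq> G \<Longrightarrow> X \<oplus> Y \<subseteq> G"
proof
  fix z assume G: "is_subgroup G" and X: "X \<subseteq> G" and Y: "Y \<subseteq> G" and z: "z \<in> X \<oplus> Y"
  then obtain a b where "a \<in> X" "b \<in> Y" "z = a + b" by blast
  hence "a \<in> G" "b \<in> G" "z = a + b" using X Y by auto
  thus "z \<in> G" using G unfolding is_subgroup_def by blast
qed

lemma stabilizer_sub_subgroup: "is_subgroup G \<Longrightarrow> S \<subseteq> G \<Longrightarrow> S \<noteq> {} \<Longrightarrow> stabilizer S \<subseteq> G"
proof
  fix g assume G: "is_subgroup G" and S: "S \<subseteq> G" "S \<noteq> {}" and g: "g \<in> stabilizer S"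
  obtain p where p: "p \<in> S" using S by blast
  have "g + p \<in> G" "p \<in> G" using stabilizer_mem[OF g p] p S by auto
  hence "(g + p) + (- p) \<in> G" using G unfolding is_subgroup_def by blast
  thus "g \<in> G" by simp
qed

lemma subgroup_card_pos: "is_subgroup H \<Longrightarrow> finite H \<Longrightarrow> 0 < card H"
  unfolding is_subgroup_def by (auto simp: card_gt_0_iff)

section \<open>Kneser's theorem\<close>

text \<open>The theorem is proved by strong induction
  on |A + B|; the lemmas below take the induction hypothesis as an assumption.\<close>
definition kneser_ineq :: "'a::ab_group_add set \<Rightarrow> 'a set \<Rightarrow> bool" where
  "kneser_ineq A B \<longleftrightarrow> card (A \<oplus> stabilizer (A \<oplus> B)) + card (B \<oplus> stabilizer (A \<oplus> B))
              \<le> card (A \<oplus> B) + card (stabilizer (A \<oplus> B))"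

text \<open>Degenerate case: if every translate of t that meets s lies in s, then the
  differences of t stabilize s and s + t is a translate of s.\<close>
lemma kneser_translate_closed:
  fixes s t :: "'a::ab_group_add set"
  assumes fs: "finite s" and ft: "finite t" and nes: "s \<noteq> {}" and ne: "t \<noteq> {}"
    and T: "\<And>g. (+) g ` t \<inter> s \<noteq> {} \<Longrightarrow> (+) g ` t \<subseteq> s"
  shows "card s + card t \<le> card (s \<oplus> t) + card (stabilizer (s \<oplus> t))"
proof -
  obtain b where b: "b \<in> t" using ne by blast
  have diff: "b1 - b2 \<in> stabilizer s" if b12: "b1 \<in> t" "b2 \<in> t" for b1 b2
  proof (rule stabilizer_I[OF fs])
    fix x assume x: "x \<in> s"
    have "x - b2 + b2 \<in> (+) (x - b2) ` t" using b12(2) by blast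
    hence "(+) (x - b2) ` t \<inter> s \<noteq> {}" using x by auto
    hence "(+) (x - b2) ` t \<subseteq> s" by (rule T)
    hence "x - b2 + b1 \<in> s" using b12(1) by blast
    thus "b1 - b2 + x \<in> s" by (simp add: algebra_simps)
  qed
  have eq: "s \<oplus> t = (+) b ` s"
  proof
    show "s \<oplus> t \<subseteq> (+) b ` s"
    proof
      fix z assume "z \<in> s \<oplus> t"
      then obtain a c where ac: "a \<in> s" "c \<in> t" "z = a + c" by blast
      hence "c - b + a \<in> s" using diff[of c b] b stabilizer_mem by blast
      moreover have "z = b + (c - b + a)" using ac(3) by (simp add: algebra_simps)
      ultimately show "z \<in> (+) b ` s" by blast
    qed
    show "(+) b ` s \<subseteq> s \<oplus> t"
    proof
      fix z assume "z \<in> (+) b ` s"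
      then obtain a where "a \<in> s" "z = b + a" by blast
      thus "z \<in> s \<oplus> t" using sumset_I[of a s b t] b by (simp add: add.commute)
    qed
  qed
  have c1: "card (s \<oplus> t) = card s" using eq by (simp add: card_image)
  have st: "stabilizer (s \<oplus> t) = stabilizer s" using eq stabilizer_translate by simp
  have sub: "(\<lambda>c. c - b) ` t \<subseteq> stabilizer s" using diff b by blast
  have "card t = card ((\<lambda>c. c - b) ` t)" by (rule card_image[symmetric]) (simp add: inj_on_def)
  also have "\<dots> \<le> card (stabilizer s)" using card_mono[OF stabilizer_finite[OF fs nes] sub] .
  finally show ?thesis using c1 st by simp
qed

lemma card_Un_sumset_le:
  fixes P Q L :: "'a::ab_group_add set"
  assumes "finite P" "finite Q" "finite L"
  shows "card ((P \<union> Q) \<oplus> L) \<le> card (P \<oplus> L) + card (Q \<oplus> L)"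
  using assms by (simp add: sumset_Un_left card_Un_le)

lemma coset_closed:
  fixes H L :: "'a::ab_group_add set"
  assumes H: "is_subgroup H" and LH: "L \<subseteq> H" and u: "u \<in> coset x H" and l: "l \<in> L"
  shows "u + l \<in> coset x H"
proof -
  have "u - x \<in> H" using u coset_iff[OF H] by blast
  hence "(u - x) + l \<in> H" using H l LH unfolding is_subgroup_def by blast
  thus ?thesis using coset_iff[OF H] by (simp add: algebra_simps)
qed

lemma coset_out:
  fixes H L :: "'a::ab_group_add set"
  assumes H: "is_subgroup H" and L: "is_subgroup L" and LH: "L \<subseteq> H" and u: "u \<notin> coset x H" and l: "l \<in> L"
  shows "u + l \<notin> coset x H"
proof
  assume "u + l \<in> coset x H"
  moreover have "- l \<in> L" using L l unfolding is_subgroup_def by blast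
  ultimately have "u + l + - l \<in> coset x H" using coset_closed[OF H LH] by blast
  thus False using u by simp
qed

lemma sumset_coset_sub:
  fixes H L :: "'a::ab_group_add set"
  assumes H: "is_subgroup H" and LH: "L \<subseteq> H" and P: "P \<subseteq> coset x H"
  shows "P \<oplus> L \<subseteq> coset x H"
  using coset_closed[OF H LH] P by blast

lemma coset_sub_sumset:
  fixes H :: "'a::ab_group_add set"
  assumes "x \<in> U"
  shows "coset x H \<subseteq> U \<oplus> H"
  unfolding coset_def using assms by auto

lemma card_sumset_one_coset:
  fixes U H L :: "'a::ab_group_add set"
  assumes H: "is_subgroup H" and L: "is_subgroup L" and LH: "L \<subseteq> H" and fU: "finite U" and fH: "finite H"
    and x: "x \<in> U"
  shows "card (U \<oplus> L) + card H \<le> card (U \<oplus> H) + card ((U \<inter> coset x H) \<oplus> L)"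
proof -
  let ?X = "coset x H"
  have fL: "finite L" using finite_subset LH fH by blast
  have Ueq: "U = (U - ?X) \<union> (U \<inter> ?X)" by blast
  have sub2: "(U - ?X) \<oplus> L \<subseteq> (U \<oplus> H) - ?X"
  proof
    fix z assume "z \<in> (U - ?X) \<oplus> L"
    then obtain u l where u: "u \<in> U" "u \<notin> ?X" and l: "l \<in> L" and z: "z = u + l" by blast
    have "z \<in> U \<oplus> H" using u l LH z by blast
    moreover have "z \<notin> ?X" using coset_out[OF H L LH u(2) l] z by simp
    ultimately show "z \<in> (U \<oplus> H) - ?X" by blast
  qed
  have Xsub: "?X \<subseteq> U \<oplus> H" using coset_sub_sumset[OF x] .
  have fUH: "finite (U \<oplus> H)" using fU fH by simp
  have "card (U \<oplus> L) \<le> card ((U - ?X) \<oplus> L) + card ((U \<inter> ?X) \<oplus> L)"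
    using card_Un_sumset_le[of "U - ?X" "U \<inter> ?X" L] fU fL Ueq by (metis finite_Diff finite_Int)
  also have "card ((U - ?X) \<oplus> L) \<le> card ((U \<oplus> H) - ?X)"
    using card_mono[OF _ sub2] fUH by simp
  also have "card ((U \<oplus> H) - ?X) = card (U \<oplus> H) - card H"
    using card_Diff_subset[OF finite_subset[OF Xsub fUH] Xsub] coset_card[of x H] by simp
  finally show ?thesis using card_mono[OF fUH Xsub] coset_card[of x H] by simp
qed

lemma card_sumset_two_cosets:
  fixes U H L :: "'a::ab_group_add set"
  assumes H: "is_subgroup H" and L: "is_subgroup L" and LH: "L \<subseteq> H" and fU: "finite U" and fH: "finite H"
    and x: "x \<in> U" and y: "y \<in> U" and XY: "coset x H \<noteq> coset y H"
  shows "card (U \<oplus> L) + 2 * card H \<le> card (U \<oplus> H) + card ((U \<inter> coset x H) \<oplus> L) + card ((U \<inter> coset y H) \<oplus> L)"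
proof -
  let ?X = "coset x H" and ?Y = "coset y H"
  have fL: "finite L" using finite_subset LH fH by blast
  have disj: "?X \<inter> ?Y = {}" using coset_disj[OF H XY] .
  have Ueq: "U = ((U - ?X - ?Y) \<union> (U \<inter> ?X)) \<union> (U \<inter> ?Y)" by blast
  have sub2: "(U - ?X - ?Y) \<oplus> L \<subseteq> (U \<oplus> H) - (?X \<union> ?Y)"
  proof
    fix z assume "z \<in> (U - ?X - ?Y) \<oplus> L"
    then obtain u l where u: "u \<in> U" "u \<notin> ?X" "u \<notin> ?Y" and l: "l \<in> L" and z: "z = u + l" by blast
    have "z \<in> U \<oplus> H" using u l LH z by blast
    moreover have "z \<notin> ?X" using coset_out[OF H L LH u(2) l] z by simp
    moreover have "z \<notin> ?Y" using coset_out[OF H L LH u(3) l] z by simp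
    ultimately show "z \<in> (U \<oplus> H) - (?X \<union> ?Y)" by blast
  qed
  have XYsub: "?X \<union> ?Y \<subseteq> U \<oplus> H" using coset_sub_sumset[OF x] coset_sub_sumset[OF y] by blast
  have fUH: "finite (U \<oplus> H)" using fU fH by simp
  have cXY: "card (?X \<union> ?Y) = 2 * card H"
    using card_Un_disjoint[OF finite_subset[OF _ fUH] finite_subset[OF _ fUH] disj] XYsub coset_card[of x H] coset_card[of y H]
    by simp
  have "card (U \<oplus> L) \<le> card (((U - ?X - ?Y) \<union> (U \<inter> ?X)) \<oplus> L) + card ((U \<inter> ?Y) \<oplus> L)"
    using card_Un_sumset_le[of "(U - ?X - ?Y) \<union> (U \<inter> ?X)" "U \<inter> ?Y" L] fU fL Ueq by (metis finite_Diff finite_Int finite_Un)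
  also have "card (((U - ?X - ?Y) \<union> (U \<inter> ?X)) \<oplus> L) \<le> card ((U - ?X - ?Y) \<oplus> L) + card ((U \<inter> ?X) \<oplus> L)"
    using card_Un_sumset_le[of "U - ?X - ?Y" "U \<inter> ?X" L] fU fL by simp
  also have "card ((U - ?X - ?Y) \<oplus> L) \<le> card ((U \<oplus> H) - (?X \<union> ?Y))"
    using card_mono[OF _ sub2] fUH by simp
  also have "card ((U \<oplus> H) - (?X \<union> ?Y)) = card (U \<oplus> H) - 2 * card H"
    using card_Diff_subset[OF finite_subset[OF XYsub fUH] XYsub] cXY by simp
  finally show ?thesis using card_mono[OF fUH XYsub] cXY by simp
qed

lemma kneser_periodized:
  fixes P Q L D :: "'a::ab_group_add set"
  assumes IH: "\<And>A B::'a set. finite A \<Longrightarrow> finite B \<Longrightarrow> A \<noteq> {} \<Longrightarrow> B \<noteq> {} \<Longrightarrow> card (A \<oplus> B) < n \<Longrightarrow> kneser_ineq A B"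
    and fP: "finite P" and fQ: "finite Q" and fL: "finite L" and neP: "P \<noteq> {}" and neQ: "Q \<noteq> {}"
    and L: "is_subgroup L" and PQ: "P \<oplus> Q \<subseteq> D" and DL: "D \<oplus> L = D" and fD: "finite D" and Dn: "card D < n"
  shows "card (P \<oplus> L) + card (Q \<oplus> L) \<le> card ((P \<oplus> L) \<oplus> (Q \<oplus> L)) + card (stabilizer ((P \<oplus> L) \<oplus> (Q \<oplus> L)))"
    and "(P \<oplus> L) \<oplus> (Q \<oplus> L) \<subseteq> D"
proof -
  let ?P = "P \<oplus> L" and ?Q = "Q \<oplus> L"
  let ?R = "?P \<oplus> ?Q" and ?M = "stabilizer (?P \<oplus> ?Q)"
  have "?R = (P \<oplus> Q) \<oplus> (L \<oplus> L)" by (metis sumset_assoc sumset_comm)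
  also have "\<dots> = (P \<oplus> Q) \<oplus> L" using subgroup_sumset_self[OF L] by simp
  also have "\<dots> \<subseteq> D \<oplus> L" using PQ sumset_mono by blast
  finally show RD: "?R \<subseteq> D" using DL by simp
  have fR: "finite ?R" using fP fQ fL by simp
  have Rn: "card ?R < n" using card_mono[OF fD RD] Dn by simp
  have ne: "?P \<noteq> {}" "?Q \<noteq> {}" using neP neQ sumset_subgroup_sup[OF L] by blast+
  have "kneser_ineq ?P ?Q" by (rule IH) (use fP fQ fL ne Rn in simp_all)
  hence k: "card (?P \<oplus> ?M) + card (?Q \<oplus> ?M) \<le> card ?R + card ?M" unfolding kneser_ineq_def .
  have fM: "finite ?M" using stabilizer_finite[OF fR sumset_ne[OF ne]] .
  have "card ?P \<le> card (?P \<oplus> ?M)"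
    using card_mono[OF sumset_finite[OF sumset_finite[OF fP fL] fM] sumset_subgroup_sup[OF subgroup_stabilizer]] .
  moreover have "card ?Q \<le> card (?Q \<oplus> ?M)"
    using card_mono[OF sumset_finite[OF sumset_finite[OF fQ fL] fM] sumset_subgroup_sup[OF subgroup_stabilizer]] .
  ultimately show "card ?P + card ?Q \<le> card ?R + card ?M" using k by simp
qed



lemma coset_stabilizer_outside: "z \<notin> R \<Longrightarrow> coset z (stabilizer R) \<inter> R = {}"
proof (rule ccontr)
  assume z: "z \<notin> R" and "coset z (stabilizer R) \<inter> R \<noteq> {}"
  then obtain g where g: "g \<in> stabilizer R" "z + g \<in> R" unfolding coset_def by auto
  have "- g + (z + g) \<in> R" using stabilizer_mem[OF stabilizer_neg[OF g(1)] g(2)] .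
  thus False using z by simp
qed

text \<open>A set D inside a coset Z of H, not filling Z, covered by two nonempty sets
  R1, R2: their sizes and stabilizers are bounded by |H| + |D| + |stab D|, since a
  point of Z outside D keeps away from R1 (resp. R2) a coset of stab R1 (resp. stab R2).\<close>
lemma two_piece_bound:
  fixes H L D R1 R2 Z :: "'a::ab_group_add set"
  assumes H: "is_subgroup H" and fH: "finite H" and L: "L = stabilizer D" and fD: "finite D"
    and DZ: "D \<subseteq> Z" and Z: "Z = coset w H" and ZD: "\<not> Z \<subseteq> D"
    and R12: "R1 \<union> R2 = D" and ne1: "R1 \<noteq> {}" and ne2: "R2 \<noteq> {}"
  shows "card R1 + card R2 + card (stabilizer R1) + card (stabilizer R2) \<le> card H + card D + card L"
proof -
  let ?M1 = "stabilizer R1" and ?M2 = "stabilizer R2"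
  have fR1: "finite R1" and fR2: "finite R2" using R12 fD by (auto intro: finite_subset)
  have fZ: "finite Z" using Z fH unfolding coset_def by simp
  have cZ: "card Z = card H" using Z coset_card by simp
  obtain z where zZ: "z \<in> Z" and zD: "z \<notin> D" using ZD by blast
  have R1Z: "R1 \<subseteq> coset w H" and R2Z: "R2 \<subseteq> coset w H" using R12 DZ Z by auto
  have M1H: "?M1 \<subseteq> H" using stabilizer_in_coset[OF H R1Z ne1] .
  have M2H: "?M2 \<subseteq> H" using stabilizer_in_coset[OF H R2Z ne2] .
  have M12L: "?M1 \<inter> ?M2 \<subseteq> L"
  proof
    fix g assume g: "g \<in> ?M1 \<inter> ?M2"
    have "(+) g ` D = (+) g ` R1 \<union> (+) g ` R2" using R12 by auto
    also have "\<dots> = R1 \<union> R2" using g unfolding stabilizer_def by simp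
    finally show "g \<in> L" using R12 L unfolding stabilizer_def by simp
  qed
  have out1: "coset z ?M1 \<inter> R1 = {}" and out2: "coset z ?M2 \<inter> R2 = {}"
    using coset_stabilizer_outside zD R12 by blast+
  have zsub: "coset z ?M1 \<union> coset z ?M2 \<subseteq> Z"
  proof -
    have "z \<in> coset w H" using zZ Z by simp
    hence "coset z H = Z" using coset_eq[OF H] Z by simp
    thus ?thesis using M1H M2H unfolding coset_def by auto
  qed
  have int: "R1 \<inter> R2 \<subseteq> Z - (coset z ?M1 \<union> coset z ?M2)" using out1 out2 R1Z R2Z Z by blast
  have fM1: "finite ?M1" using stabilizer_finite[OF fR1 ne1] .
  have fM2: "finite ?M2" using stabilizer_finite[OF fR2 ne2] .
  have fL: "finite L" using L stabilizer_finite[OF fD] R12 ne1 by blast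
  have ii: "coset z ?M1 \<inter> coset z ?M2 = coset z (?M1 \<inter> ?M2)" unfolding coset_def by auto
  have "card (coset z ?M1 \<inter> coset z ?M2) \<le> card L"
    using ii coset_card[of z "?M1 \<inter> ?M2"] card_mono[OF fL M12L] by simp
  moreover have "card (coset z ?M1 \<union> coset z ?M2) + card (coset z ?M1 \<inter> coset z ?M2) = card ?M1 + card ?M2"
    using card_Un_Int[of "coset z ?M1" "coset z ?M2"] fM1 fM2 coset_card[of z ?M1] coset_card[of z ?M2]
    unfolding coset_def by simp
  ultimately have u: "card ?M1 + card ?M2 \<le> card (coset z ?M1 \<union> coset z ?M2) + card L" by simp
  have "card (R1 \<inter> R2) \<le> card (Z - (coset z ?M1 \<union> coset z ?M2))"
    using card_mono[OF _ int] fZ by simp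
  also have "\<dots> = card Z - card (coset z ?M1 \<union> coset z ?M2)"
    using card_Diff_subset[OF finite_subset[OF zsub fZ] zsub] .
  finally have i2: "card (R1 \<inter> R2) + card (coset z ?M1 \<union> coset z ?M2) \<le> card H"
    using card_mono[OF fZ zsub] cZ by simp
  have "card R1 + card R2 = card D + card (R1 \<inter> R2)"
    using card_Un_Int[OF fR1 fR2] R12 by simp
  thus ?thesis using u i2 by simp
qed


lemma sumset_cosets_sub:
  assumes H: "is_subgroup H"
  shows "(P \<inter> coset x H) \<oplus> (Q \<inter> coset y H) \<subseteq> coset (x + y) H"
proof
  fix z assume "z \<in> (P \<inter> coset x H) \<oplus> (Q \<inter> coset y H)"
  then obtain a b where ab: "a \<in> coset x H" "b \<in> coset y H" "z = a + b" by blast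
  have "a - x \<in> H" "b - y \<in> H" using ab coset_iff[OF H] by blast+
  hence "(a - x) + (b - y) \<in> H" using H unfolding is_subgroup_def by blast
  thus "z \<in> coset (x + y) H" using coset_iff[OF H] ab(3) by (simp add: algebra_simps)
qed

lemma stabilizer_Un_coset_part:
  fixes C D Z :: "'a::ab_group_add set"
  assumes fC: "finite C" and fD: "finite D"
    and Z: "Z = coset w (stabilizer C)" and CZ: "C \<inter> Z = {}"
    and DZ: "D \<subseteq> Z" and ZD: "\<not> Z \<subseteq> D" and LH: "stabilizer D \<subseteq> stabilizer C"
  shows "stabilizer (C \<union> D) = stabilizer D"
proof
  let ?H = "stabilizer C" and ?L = "stabilizer D"
  have H: "is_subgroup ?H" by (rule subgroup_stabilizer)
  have CH: "C \<oplus> ?H = C" by (rule sumset_stabilizer_self)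
  show "?L \<subseteq> stabilizer (C \<union> D)"
  proof
    fix g assume g: "g \<in> ?L"
    hence "(+) g ` C = C" using LH unfolding stabilizer_def by blast
    moreover have "(+) g ` D = D" using g unfolding stabilizer_def by simp
    ultimately show "g \<in> stabilizer (C \<union> D)" unfolding stabilizer_def by (simp add: image_Un)
  qed
  show "stabilizer (C \<union> D) \<subseteq> ?L"
  proof
    fix g assume g: "g \<in> stabilizer (C \<union> D)"
    have gC: "g + c \<in> C" if c: "c \<in> C" for c
    proof (rule ccontr)
      assume "g + c \<notin> C"
      moreover have "g + c \<in> C \<union> D" using stabilizer_mem[OF g] c by simp
      ultimately have gcD: "g + c \<in> D" by simp
      have "coset (g + c) ?H \<subseteq> C \<union> D"
      proof
        fix u assume "u \<in> coset (g + c) ?H"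
        then obtain h where h: "h \<in> ?H" "u = g + (c + h)" unfolding coset_def by (auto simp: add.assoc)
        have "c + h \<in> C" using CH c h(1) by (metis sumset_I)
        thus "u \<in> C \<union> D" using stabilizer_mem[OF g] h(2) by simp
      qed
      moreover have "coset (g + c) ?H = Z" using coset_eq[OF H] gcD DZ Z by blast
      ultimately have "Z \<subseteq> D" using CZ by blast
      thus False using ZD by simp
    qed
    have gH: "g \<in> ?H" using stabilizer_I[OF fC gC] .
    have gD: "g + d \<in> D" if d: "d \<in> D" for d
    proof -
      have "g + d \<in> C \<union> D" using stabilizer_mem[OF g] d by simp
      moreover have "g + d \<in> Z"
        using coset_closed[OF H subset_refl _ gH, of d w] d DZ Z by (auto simp: add.commute)
      ultimately show ?thesis using CZ by blast
    qed
    show "g \<in> ?L" using stabilizer_I[OF fD gD] .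
  qed
qed

lemma four_piece_bound:
  fixes sX tX sY tY D :: "'a::ab_group_add set"
  assumes IH: "\<And>A B::'a set. finite A \<Longrightarrow> finite B \<Longrightarrow> A \<noteq> {} \<Longrightarrow> B \<noteq> {} \<Longrightarrow>
                 card (A \<oplus> B) < n \<Longrightarrow> kneser_ineq A B"
    and H: "is_subgroup H" and fH: "finite H"
    and fin: "finite sX" "finite tY" "finite sY" "finite tX" and ne: "sX \<noteq> {}" "tY \<noteq> {}"
    and X: "tX \<subseteq> coset x H" and Y: "sY \<subseteq> coset y H"
    and D: "D = (sX \<oplus> tY) \<union> (sY \<oplus> tX)" and Dn: "card D < n"
    and DZ: "D \<subseteq> coset w H" and ZD: "\<not> coset w H \<subseteq> D" and LH: "stabilizer D \<subseteq> H"
  defines "L \<equiv> stabilizer D"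
  shows "card (sX \<oplus> L) + card (tX \<oplus> L) + card (sY \<oplus> L) + card (tY \<oplus> L)
           \<le> card H + card D + card L"
proof -
  have L: "is_subgroup L" unfolding L_def by (rule subgroup_stabilizer)
  have fD: "finite D" using fin D by simp
  have fL: "finite L" using finite_subset[OF LH fH] L_def by simp
  have DL: "D \<oplus> L = D" unfolding L_def by (rule sumset_stabilizer_self)
  have p1: "sX \<oplus> tY \<subseteq> D" and p2: "sY \<oplus> tX \<subseteq> D" using D by blast+
  note P1 = kneser_periodized[OF IH fin(1) fin(2) fL ne L p1 DL fD Dn]
  have small: "card (P \<oplus> L) \<le> card H" if "P \<subseteq> coset z H" for P z
  proof -
    have "P \<oplus> L \<subseteq> coset z H" using sumset_coset_sub[OF H _ that] LH L_def by simp
    moreover have "finite (coset z H)" using fH unfolding coset_def by simp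
    ultimately show ?thesis using card_mono coset_card[of z H] by metis
  qed
  let ?R1 = "(sX \<oplus> L) \<oplus> (tY \<oplus> L)" and ?R2 = "(sY \<oplus> L) \<oplus> (tX \<oplus> L)"
  have grow: "A \<oplus> B \<subseteq> (A \<oplus> L) \<oplus> (B \<oplus> L)" for A B
    using sumset_mono[OF sumset_subgroup_sup[OF L] sumset_subgroup_sup[OF L]] .
  show ?thesis
  proof (cases "sY = {} \<or> tX = {}")
    case True
    hence "D = sX \<oplus> tY" using D by auto
    hence "?R1 = D" using P1(2) grow[of sX tY] by blast
    moreover have "card (tX \<oplus> L) + card (sY \<oplus> L) \<le> card H"
      using True small[OF X] small[OF Y] by auto
    ultimately show ?thesis using P1(1) L_def by simp
  next
    case False
    hence ne2: "sY \<noteq> {}" "tX \<noteq> {}" by auto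
    note P2 = kneser_periodized[OF IH fin(3) fin(4) fL ne2 L p2 DL fD Dn]
    have R12: "?R1 \<union> ?R2 = D" using P1(2) P2(2) D grow[of sX tY] grow[of sY tX] by blast
    have ne1: "?R1 \<noteq> {}" using grow[of sX tY] sumset_ne[OF ne] by blast
    have ne2': "?R2 \<noteq> {}" using grow[of sY tX] sumset_ne[OF ne2] by blast
    have "card ?R1 + card ?R2 + card (stabilizer ?R1) + card (stabilizer ?R2) \<le> card H + card D + card L"
      by (rule two_piece_bound[OF H fH meta_eq_to_obj_eq[OF L_def] fD DZ refl ZD R12 ne1 ne2'])
    thus ?thesis using P1(1) P2(1) by simp
  qed
qed

lemma extension_count:
  fixes s t :: "'a::ab_group_add set"
  assumes IH: "\<And>A B::'a set. finite A \<Longrightarrow> finite B \<Longrightarrow> A \<noteq> {} \<Longrightarrow> B \<noteq> {} \<Longrightarrow>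
                 card (A \<oplus> B) < n \<Longrightarrow> kneser_ineq A B"
    and H: "is_subgroup H" and fH: "finite H" and fs: "finite s" and ft: "finite t"
    and x: "x \<in> s" and y: "y \<in> t"
  defines "D \<equiv> ((s \<inter> coset x H) \<oplus> (t \<inter> coset y H)) \<union> ((s \<inter> coset y H) \<oplus> (t \<inter> coset x H))"
  assumes Dn: "card D < n" and LH: "stabilizer D \<subseteq> H" and ZD: "\<not> coset (x + y) H \<subseteq> D"
  shows "card ((s \<union> t) \<oplus> stabilizer D) + card H
           \<le> card ((s \<union> t) \<oplus> H) + card D + card (stabilizer D)"
proof -
  define X Y L U where "X = coset x H" and "Y = coset y H" and "L = stabilizer D" and "U = s \<union> t"
  define sX tY sY tX where "sX = s \<inter> X" and "tY = t \<inter> Y" and "sY = s \<inter> Y" and "tX = t \<inter> X"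
  have D: "D = (sX \<oplus> tY) \<union> (sY \<oplus> tX)" unfolding D_def sX_def tY_def sY_def tX_def X_def Y_def by simp
  have fin4: "finite sX" "finite tY" "finite sY" "finite tX"
    using fs ft sX_def tY_def sY_def tX_def by auto
  have xsX: "x \<in> sX" and ytY: "y \<in> tY" using x y coset_self[OF H] sX_def tY_def X_def Y_def by auto
  have DZ: "D \<subseteq> coset (x + y) H"
    using sumset_cosets_sub[OF H, of s x t y] sumset_cosets_sub[OF H, of s y t x]
    unfolding D_def by (simp add: add.commute[of y x])
  have L: "is_subgroup L" and LH': "L \<subseteq> H" using subgroup_stabilizer LH L_def by auto
  have fL: "finite L" using finite_subset[OF LH' fH] .
  have fU: "finite U" using fs ft U_def by simp
  have xU: "x \<in> U" and yU: "y \<in> U" using x y U_def by auto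
  have UX: "U \<inter> X = sX \<union> tX" and UY: "U \<inter> Y = sY \<union> tY"
    using U_def sX_def tX_def sY_def tY_def by auto
  have "card (U \<oplus> L) + card H \<le> card (U \<oplus> H) + card D + card L"
  proof (cases "X = Y")
    case True
    hence Dsimp: "D = sX \<oplus> tY" using D sX_def sY_def tX_def tY_def by auto
    have "kneser_ineq sX tY" by (rule IH) (use fin4 xsX ytY Dsimp Dn in auto)
    hence k: "card (sX \<oplus> L) + card (tY \<oplus> L) \<le> card D + card L"
      unfolding kneser_ineq_def using Dsimp L_def by simp
    have "U \<inter> X = sX \<union> tY" using UX True tX_def tY_def by auto
    hence "card ((U \<inter> X) \<oplus> L) \<le> card (sX \<oplus> L) + card (tY \<oplus> L)"
      using card_Un_sumset_le[OF fin4(1) fin4(2) fL] by simp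
    moreover have "card (U \<oplus> L) + card H \<le> card (U \<oplus> H) + card ((U \<inter> X) \<oplus> L)"
      using card_sumset_one_coset[OF H L LH' fU fH xU] X_def by simp
    ultimately show ?thesis using k by simp
  next
    case False
    have "card (U \<oplus> L) + 2 * card H
            \<le> card (U \<oplus> H) + card ((U \<inter> X) \<oplus> L) + card ((U \<inter> Y) \<oplus> L)"
      using card_sumset_two_cosets[OF H L LH' fU fH xU yU] False X_def Y_def by simp
    moreover have "card ((U \<inter> X) \<oplus> L) \<le> card (sX \<oplus> L) + card (tX \<oplus> L)"
      using UX card_Un_sumset_le[OF fin4(1) fin4(4) fL] by simp
    moreover have "card ((U \<inter> Y) \<oplus> L) \<le> card (sY \<oplus> L) + card (tY \<oplus> L)"
      using UY card_Un_sumset_le[OF fin4(3) fin4(2) fL] by simp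
    moreover have "card (sX \<oplus> L) + card (tX \<oplus> L) + card (sY \<oplus> L) + card (tY \<oplus> L)
                     \<le> card H + card D + card L"
      unfolding L_def
      by (rule four_piece_bound[OF IH H fH fin4 _ _ _ _ D Dn DZ ZD LH])
        (use xsX ytY tX_def sY_def X_def Y_def in auto)
    ultimately show ?thesis by simp
  qed
  thus ?thesis using U_def L_def by simp
qed

lemma extension:
  fixes s t C :: "'a::ab_group_add set"
  assumes IH: "\<And>A B::'a set. finite A \<Longrightarrow> finite B \<Longrightarrow> A \<noteq> {} \<Longrightarrow> B \<noteq> {} \<Longrightarrow>
                 card (A \<oplus> B) < card (s \<oplus> t) \<Longrightarrow> kneser_ineq A B"
    and fs: "finite s" and ft: "finite t"
    and CS: "C \<subseteq> s \<oplus> t" and Cne: "C \<noteq> {}"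
    and conv: "card (s \<inter> t) + card ((s \<union> t) \<oplus> stabilizer C) \<le> card C + card (stabilizer C)"
    and w: "w \<in> s \<oplus> t" and wn: "\<not> coset w (stabilizer C) \<subseteq> s \<oplus> t"
  shows "\<exists>C'. C' \<subseteq> s \<oplus> t \<and> C' \<noteq> {} \<and>
           card (s \<inter> t) + card ((s \<union> t) \<oplus> stabilizer C') \<le> card C' + card (stabilizer C') \<and>
           card (stabilizer C') < card (stabilizer C)"
proof -
  define H where "H = stabilizer C"
  have fS: "finite (s \<oplus> t)" using fs ft by simp
  have fC: "finite C" using finite_subset[OF CS fS] .
  have H: "is_subgroup H" using subgroup_stabilizer H_def by simp
  have fH: "finite H" using stabilizer_finite[OF fC Cne] H_def by simp
  have CH: "C \<oplus> H = C" using sumset_stabilizer_self H_def by simp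
  obtain x y where x: "x \<in> s" and y: "y \<in> t" and wxy: "w = x + y" using w by blast
  define Z where "Z = coset w H"
  define D where "D = ((s \<inter> coset x H) \<oplus> (t \<inter> coset y H)) \<union> ((s \<inter> coset y H) \<oplus> (t \<inter> coset x H))"
  define L where "L = stabilizer D"
  have CZ: "C \<inter> Z = {}"
  proof (rule ccontr)
    assume "C \<inter> Z \<noteq> {}"
    then obtain c where c: "c \<in> C" "c \<in> Z" by blast
    have "coset c H = Z" using coset_eq[OF H] c(2) Z_def by simp
    thus False using periodic_coset[OF H CH c(1)] wn CS Z_def H_def by auto
  qed
  have DZ: "D \<subseteq> Z"
    using sumset_cosets_sub[OF H, of s x t y] sumset_cosets_sub[OF H, of s y t x]
    unfolding D_def Z_def wxy by (simp add: add.commute[of y x])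
  have DS: "D \<subseteq> s \<oplus> t" unfolding D_def by (intro Un_least sumset_mono) auto
  have wD: "w \<in> D" unfolding D_def wxy using x y coset_self[OF H] by blast
  have fD: "finite D" using fs ft D_def by simp
  have ZD: "\<not> Z \<subseteq> D" using wn DS Z_def H_def by blast
  have LH: "L \<subseteq> H" using stabilizer_in_coset[OF H DZ[unfolded Z_def]] wD L_def by blast
  have HnL: "\<not> H \<subseteq> L"
  proof
    assume "H \<subseteq> L"
    hence "D \<oplus> H = D" using periodic_iff[OF H fD] L_def by simp
    hence "Z \<subseteq> D" using periodic_coset[OF H _ wD] Z_def by simp
    thus False using ZD by simp
  qed
  have cardL: "card L < card H" using psubset_card_mono[OF fH] LH HnL by blast
  have stabC': "stabilizer (C \<union> D) = L"
    using stabilizer_Un_coset_part[OF fC fD _ CZ DZ ZD] LH Z_def H_def L_def by simp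
  have CD: "C \<inter> D = {}" using CZ DZ by blast
  have cardC': "card (C \<union> D) = card C + card D" using card_Un_disjoint[OF fC fD CD] .
  have "D \<subset> s \<oplus> t" using DS Cne CS CD by blast
  hence DltS: "card D < card (s \<oplus> t)" using psubset_card_mono[OF fS] by simp
  have "card ((s \<union> t) \<oplus> L) + card H \<le> card ((s \<union> t) \<oplus> H) + card D + card L"
    using extension_count[OF IH H fH fs ft x y] DltS LH ZD Z_def wxy D_def L_def by simp
  hence "card (s \<inter> t) + card ((s \<union> t) \<oplus> L) \<le> card (C \<union> D) + card L"
    using conv cardC' H_def by simp
  moreover have "C \<union> D \<subseteq> s \<oplus> t" using CS DS by simp
  ultimately show ?thesis using Cne stabC' cardL H_def by (intro exI[of _ "C \<union> D"]) simp
qed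

lemma sumset_Int_Un_sub: "(s \<inter> u) \<oplus> (s \<union> u) \<subseteq> s \<oplus> u"
proof
  fix z assume "z \<in> (s \<inter> u) \<oplus> (s \<union> u)"
  then obtain a b where ab: "a \<in> s \<inter> u" "b \<in> s \<union> u" "z = a + b" by blast
  show "z \<in> s \<oplus> u"
  proof (cases "b \<in> u")
    case True thus ?thesis using ab by blast
  next
    case False
    hence "b \<in> s" using ab by blast
    thus ?thesis using ab sumset_I[of b s a u] by (simp add: add.commute)
  qed
qed

text \<open>Kneser's inequality for the pair (s n u, s u u) transfers to (s, u) when
  (s n u) + (s u u) is a proper part of s + u: choose a nonempty C within s + u
  satisfying the inequality with minimal stabilizer; by the extension step every
  coset of its stabilizer through s + u stays inside, so stab C <= stab(s + u).\<close>
lemma kneser_Int_Un: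
  fixes s u :: "'a::ab_group_add set"
  assumes IH: "\<And>A B::'a set. finite A \<Longrightarrow> finite B \<Longrightarrow> A \<noteq> {} \<Longrightarrow> B \<noteq> {} \<Longrightarrow>
                 card (A \<oplus> B) < card (s \<oplus> u) \<Longrightarrow> kneser_ineq A B"
    and fs: "finite s" and fu: "finite u" and neI: "s \<inter> u \<noteq> {}"
    and lt: "card ((s \<inter> u) \<oplus> (s \<union> u)) < card (s \<oplus> u)"
  shows "card (s \<inter> u) + card (s \<union> u) \<le> card (s \<oplus> u) + card (stabilizer (s \<oplus> u))"
proof -
  define I V where "I = s \<inter> u" and "V = s \<union> u"
  have fI: "finite I" and fV: "finite V" and neI': "I \<noteq> {}" and neV: "V \<noteq> {}"
    using fs fu neI I_def V_def by auto
  have fsu: "finite (s \<oplus> u)" using fs fu by simp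
  have IVsub: "I \<oplus> V \<subseteq> s \<oplus> u" unfolding I_def V_def by (rule sumset_Int_Un_sub)
  have "kneser_ineq I V" by (rule IH) (use fI fV neI' neV lt I_def V_def in auto)
  hence k: "card (I \<oplus> stabilizer (I \<oplus> V)) + card (V \<oplus> stabilizer (I \<oplus> V))
              \<le> card (I \<oplus> V) + card (stabilizer (I \<oplus> V))"
    unfolding kneser_ineq_def .
  have fM0: "finite (stabilizer (I \<oplus> V))"
    using stabilizer_finite[OF sumset_finite[OF fI fV] sumset_ne[OF neI' neV]] .
  have "card I \<le> card (I \<oplus> stabilizer (I \<oplus> V))"
    using card_mono[OF sumset_finite[OF fI fM0] sumset_subgroup_sup[OF subgroup_stabilizer]] .
  hence conv0: "card I + card (V \<oplus> stabilizer (I \<oplus> V)) \<le> card (I \<oplus> V) + card (stabilizer (I \<oplus> V))"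
    using k by simp
  define F where "F = {C. C \<subseteq> s \<oplus> u \<and> C \<noteq> {} \<and>
                          card I + card (V \<oplus> stabilizer C) \<le> card C + card (stabilizer C)}"
  have IVF: "I \<oplus> V \<in> F" using IVsub sumset_ne[OF neI' neV] conv0 unfolding F_def by simp
  obtain C where CF: "C \<in> F" and Cmin: "\<And>C'. C' \<in> F \<Longrightarrow> card (stabilizer C) \<le> card (stabilizer C')"
    using ex_has_least_nat[of "\<lambda>C. C \<in> F" "I \<oplus> V" "\<lambda>C. card (stabilizer C)"] IVF by blast
  have CS: "C \<subseteq> s \<oplus> u" and Cne: "C \<noteq> {}"
    and conv: "card I + card (V \<oplus> stabilizer C) \<le> card C + card (stabilizer C)"
    using CF F_def by auto
  have closed: "coset w (stabilizer C) \<subseteq> s \<oplus> u" if w: "w \<in> s \<oplus> u" for w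
  proof (rule ccontr)
    assume "\<not> coset w (stabilizer C) \<subseteq> s \<oplus> u"
    then obtain C' where C': "C' \<subseteq> s \<oplus> u" "C' \<noteq> {}"
        "card (s \<inter> u) + card ((s \<union> u) \<oplus> stabilizer C') \<le> card C' + card (stabilizer C')"
        "card (stabilizer C') < card (stabilizer C)"
      using extension[OF IH fs fu CS Cne _ w] conv I_def V_def by blast
    have "C' \<in> F" using C'(1-3) F_def I_def V_def by simp
    thus False using Cmin C'(4) by fastforce
  qed
  have HK: "stabilizer C \<subseteq> stabilizer (s \<oplus> u)"
  proof
    fix h assume h: "h \<in> stabilizer C"
    have "h + z \<in> s \<oplus> u" if "z \<in> s \<oplus> u" for z
      using closed[OF that] h unfolding coset_def by (force simp: add.commute)
    thus "h \<in> stabilizer (s \<oplus> u)" using stabilizer_I[OF fsu] by blast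
  qed
  have fK: "finite (stabilizer (s \<oplus> u))"
    using stabilizer_finite[OF fsu] sumset_ne neI neV by blast
  have "card (stabilizer C) \<le> card (stabilizer (s \<oplus> u))" using card_mono[OF fK HK] .
  moreover have "card C \<le> card (s \<oplus> u)" using card_mono[OF fsu CS] .
  moreover have "card V \<le> card (V \<oplus> stabilizer C)"
    using card_mono[OF sumset_finite[OF fV stabilizer_finite[OF finite_subset[OF CS fsu] Cne]]
                       sumset_subgroup_sup[OF subgroup_stabilizer]] .
  ultimately show ?thesis using conv I_def V_def by simp
qed

lemma translate_Int_Un:
  fixes s t :: "'a::ab_group_add set"
  assumes fs: "finite s" and ft: "finite t"
    and ps: "s \<oplus> stabilizer (s \<oplus> t) = s" and pt: "t \<oplus> stabilizer (s \<oplus> t) = t"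
    and g1: "(+) g ` t \<inter> s \<noteq> {}" and g2: "\<not> (+) g ` t \<subseteq> s"
    and u: "u = (+) g ` t"
  shows "s \<inter> u \<noteq> {}" and "card (s \<inter> u) < card t"
    and "card (s \<inter> u) + card (s \<union> u) = card s + card t"
    and "card (s \<oplus> u) = card (s \<oplus> t)" and "stabilizer (s \<oplus> u) = stabilizer (s \<oplus> t)"
    and "(s \<inter> u) \<oplus> stabilizer (s \<oplus> t) = s \<inter> u"
    and "(s \<union> u) \<oplus> stabilizer (s \<oplus> t) = s \<union> u"
proof -
  let ?K = "stabilizer (s \<oplus> t)"
  have fu: "finite u" using ft u by simp
  have cu: "card u = card t" using u by (simp add: card_image)
  have su: "s \<oplus> u = (+) g ` (s \<oplus> t)" using sumset_translate_right u by simp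
  show "s \<inter> u \<noteq> {}" using g1 u by blast
  have "s \<inter> u \<subset> u" using g2 u by blast
  thus "card (s \<inter> u) < card t" using psubset_card_mono[OF fu] cu by simp
  show "card (s \<inter> u) + card (s \<union> u) = card s + card t" using card_Un_Int[OF fs fu] cu by simp
  show "card (s \<oplus> u) = card (s \<oplus> t)" using su by (simp add: card_image)
  show "stabilizer (s \<oplus> u) = ?K" using su stabilizer_translate by simp
  have uK: "u \<oplus> ?K = u" using sumset_translate_left[of g t ?K] pt u by simp
  have K: "is_subgroup ?K" by (rule subgroup_stabilizer)
  show "(s \<inter> u) \<oplus> ?K = s \<inter> u"
  proof
    have "(s \<inter> u) \<oplus> ?K \<subseteq> s \<oplus> ?K" "(s \<inter> u) \<oplus> ?K \<subseteq> u \<oplus> ?K"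
      using sumset_mono by blast+
    thus "(s \<inter> u) \<oplus> ?K \<subseteq> s \<inter> u" using ps uK by simp
    show "s \<inter> u \<subseteq> (s \<inter> u) \<oplus> ?K" by (rule sumset_subgroup_sup[OF K])
  qed
  show "(s \<union> u) \<oplus> ?K = s \<union> u" using sumset_Un_left[of s u ?K] ps uK by simp
qed

text \<open>If every translate of t meeting s lies in s we are in the
  degenerate case; otherwise pass to (s n u, s u u) for a suitable translate u of t.\<close>
lemma kneser_periodic:
  fixes n :: nat
  assumes IH: "\<And>A B::'a::ab_group_add set. finite A \<Longrightarrow> finite B \<Longrightarrow> A \<noteq> {} \<Longrightarrow> B \<noteq> {} \<Longrightarrow>
                 card (A \<oplus> B) < n \<Longrightarrow> kneser_ineq A B"
  shows "finite s \<Longrightarrow> finite t \<Longrightarrow> s \<noteq> {} \<Longrightarrow> t \<noteq> {} \<Longrightarrow> card (s \<oplus> t) = n \<Longrightarrow>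
     s \<oplus> stabilizer (s \<oplus> t) = s \<Longrightarrow> t \<oplus> stabilizer (s \<oplus> t) = t \<Longrightarrow>
     card s + card t \<le> card (s \<oplus> t) + card (stabilizer ((s::'a set) \<oplus> t))"
proof (induction "min (card s) (card t)" arbitrary: s t rule: less_induct)
  case less
  have main: "card s' + card t' \<le> card (s' \<oplus> t') + card (stabilizer (s' \<oplus> t'))"
    if fs: "finite s'" and ft: "finite t'" and nes: "s' \<noteq> {}" and net: "t' \<noteq> {}"
      and cn: "card (s' \<oplus> t') = n" and ps: "s' \<oplus> stabilizer (s' \<oplus> t') = s'"
      and pt: "t' \<oplus> stabilizer (s' \<oplus> t') = t'" and le: "card t' \<le> card s'"
      and mm: "min (card s') (card t') = min (card s) (card t)"
    for s' t' :: "'a set"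
  proof (cases "\<forall>g. (+) g ` t' \<inter> s' \<noteq> {} \<longrightarrow> (+) g ` t' \<subseteq> s'")
    case True
    thus ?thesis using kneser_translate_closed[OF fs ft nes net] by blast
  next
    case False
    then obtain g where g1: "(+) g ` t' \<inter> s' \<noteq> {}" and g2: "\<not> (+) g ` t' \<subseteq> s'" by blast
    define u where "u = (+) g ` t'"
    note tr = translate_Int_Un[OF fs ft ps pt g1 g2 u_def]
    have fu: "finite u" using ft u_def by simp
    have IVsub: "(s' \<inter> u) \<oplus> (s' \<union> u) \<subseteq> s' \<oplus> u" by (rule sumset_Int_Un_sub)
    have "card (s' \<inter> u) + card (s' \<union> u) \<le> card (s' \<oplus> u) + card (stabilizer (s' \<oplus> u))"
    proof (cases "card ((s' \<inter> u) \<oplus> (s' \<union> u)) = n")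
      case True
      have eq: "(s' \<inter> u) \<oplus> (s' \<union> u) = s' \<oplus> u"
        using card_subset_eq[OF _ IVsub] fs fu True cn tr(4) by simp
      have "min (card (s' \<inter> u)) (card (s' \<union> u)) < min (card s) (card t)"
        using tr(2) le mm by linarith
      hence ih: "card (s' \<inter> u) + card (s' \<union> u)
                  \<le> card ((s' \<inter> u) \<oplus> (s' \<union> u)) + card (stabilizer ((s' \<inter> u) \<oplus> (s' \<union> u)))"
        by (rule less.hyps) (use fs fu tr(1,5,6,7) eq True in auto)
      thus ?thesis using eq by simp
    next
      case False
      hence "card ((s' \<inter> u) \<oplus> (s' \<union> u)) < card (s' \<oplus> u)"
        using card_mono[OF _ IVsub] fs fu cn tr(4) by fastforce
      thus ?thesis using kneser_Int_Un[OF _ fs fu tr(1)] IH cn tr(4) by simp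
    qed
    thus ?thesis using tr(3,4,5) by simp
  qed
  show ?case
  proof (cases "card t \<le> card s")
    case True thus ?thesis using main[of s t] less.prems by simp
  next
    case False
    have "card t + card s \<le> card (t \<oplus> s) + card (stabilizer (t \<oplus> s))"
      by (rule main) (use less.prems False sumset_comm[of s t] in \<open>auto simp: min.commute\<close>)
    thus ?thesis using sumset_comm[of s t] by simp
  qed
qed

text \<open>Kneser's theorem.  Passing to A + K and B + K, K the stabilizer of A + B,
  does not change the sumset, and the periodic case was treated above.\<close>
theorem kneser:
  fixes A B :: "'a::ab_group_add set"
  shows "finite A \<Longrightarrow> finite B \<Longrightarrow> A \<noteq> {} \<Longrightarrow> B \<noteq> {} \<Longrightarrow> kneser_ineq A B"
proof (induction "card (A \<oplus> B)" arbitrary: A B rule: less_induct)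
  case less
  define K where "K = stabilizer (A \<oplus> B)"
  define s where "s = A \<oplus> K"
  define t where "t = B \<oplus> K"
  have K: "is_subgroup K" using subgroup_stabilizer K_def by simp
  have fAB: "finite (A \<oplus> B)" using less.prems by simp
  have fK: "finite K" using stabilizer_finite[OF fAB sumset_ne] less.prems K_def by simp
  have st: "s \<oplus> t = A \<oplus> B"
    using sumset_swap[of A K B K] subgroup_sumset_self[OF K] sumset_stabilizer_self[of "A \<oplus> B"] s_def t_def K_def by simp
  have fs: "finite s" "finite t" using less.prems fK s_def t_def by auto
  have nes: "s \<noteq> {}" "t \<noteq> {}" using less.prems sumset_ne K s_def t_def unfolding is_subgroup_def by blast+
  have ps: "s \<oplus> stabilizer (s \<oplus> t) = s" using st sumset_subgroup_idem[OF K] s_def K_def by simp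
  have pt: "t \<oplus> stabilizer (s \<oplus> t) = t" using st sumset_subgroup_idem[OF K] t_def K_def by simp
  have IH: "\<And>A' B'::'a set. finite A' \<Longrightarrow> finite B' \<Longrightarrow> A' \<noteq> {} \<Longrightarrow> B' \<noteq> {} \<Longrightarrow> card (A' \<oplus> B') < card (A \<oplus> B) \<Longrightarrow> kneser_ineq A' B'"
    using less.hyps by blast
  have "card s + card t \<le> card (s \<oplus> t) + card (stabilizer (s \<oplus> t))"
    by (rule kneser_periodic[OF IH]) (use fs nes st ps pt in auto)
  thus ?case unfolding kneser_ineq_def using st s_def t_def K_def by simp
qed



section \<open>Iterated sumsets\<close>

fun iter_sumset :: "'a::ab_group_add set \<Rightarrow> nat \<Rightarrow> 'a set" where
  "iter_sumset X 0 = {0}"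
| "iter_sumset X (Suc r) = iter_sumset X r \<oplus> X"

lemma iter_finite: "finite X \<Longrightarrow> finite (iter_sumset X r)"
  by (induction r) auto

lemma iter_ne: "X \<noteq> {} \<Longrightarrow> iter_sumset X r \<noteq> {}"
  by (induction r) (auto simp: sumset_ne)

lemma zero_in_iter:
  assumes X0: "0 \<in> X"
  shows "0 \<in> iter_sumset X r"
proof (induction r)
  case 0 show ?case by simp
next
  case (Suc r)
  from sumset_I[OF Suc X0] show ?case by simp
qed

lemma iter_sumset_in_subgroup:
  assumes H: "is_subgroup H" and XH: "X \<subseteq> H"
  shows "iter_sumset X r \<subseteq> H"
proof (induction r)
  case 0 show ?case using H unfolding is_subgroup_def by simp
next
  case (Suc r)
  show ?case using subgroup_closed[OF H Suc XH] by simp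
qed

lemma iter_sumset_periodize: "is_subgroup H \<Longrightarrow> 0 < r \<Longrightarrow> iter_sumset (X \<oplus> H) r = iter_sumset X r \<oplus> H"
proof (induction r)
  case 0 thus ?case by simp
next
  case (Suc r)
  show ?case
  proof (cases "r = 0")
    case True thus ?thesis by simp
  next
    case False
    hence "iter_sumset (X \<oplus> H) (Suc r) = (iter_sumset X r \<oplus> H) \<oplus> (X \<oplus> H)" using Suc by simp
    also have "\<dots> = (iter_sumset X r \<oplus> X) \<oplus> (H \<oplus> H)" by (rule sumset_swap)
    also have "\<dots> = iter_sumset X (Suc r) \<oplus> H" using subgroup_sumset_self[OF Suc.prems(1)] by simp
    finally show ?thesis .
  qed
qed

text \<open>Iterated Kneser inequality: with H the stabilizer of hX,
  h |X + H| <= |hX| + (h - 1) |H|.  Induction on h, applying Kneser's theorem to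
  (h-1)X + X and the induction hypothesis to X + H.\<close>
lemma kneser_iterated:
  fixes X :: "'a::ab_group_add set"
  assumes "finite X" "X \<noteq> {}" "0 < r"
  shows "r * card (X \<oplus> stabilizer (iter_sumset X r)) \<le> card (iter_sumset X r) + (r - 1) * card (stabilizer (iter_sumset X r))"
  using assms
proof (induction r arbitrary: X)
  case 0 thus ?case by simp
next
  case (Suc r)
  show ?case
  proof (cases "r = 0")
    case True
    thus ?thesis using sumset_stabilizer_self[of X] by simp
  next
    case False
    define Y where "Y = iter_sumset X (Suc r)"
    define H where "H = stabilizer Y"
    have H: "is_subgroup H" using subgroup_stabilizer H_def by simp
    have fX: "finite X" and neX: "X \<noteq> {}" using Suc.prems by auto
    have fR: "finite (iter_sumset X r)" using iter_finite[OF fX] .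
    have neR: "iter_sumset X r \<noteq> {}" using iter_ne[OF neX] .
    have Yeq: "Y = iter_sumset X r \<oplus> X" using Y_def by simp
    have fY: "finite Y" using fR fX Yeq by simp
    have neY: "Y \<noteq> {}" using Yeq sumset_ne[OF neR neX] by simp
    have fH: "finite H" using stabilizer_finite[OF fY neY] H_def by simp
    have "kneser_ineq (iter_sumset X r) X" using kneser[OF fR fX neR neX] .
    hence k: "card (iter_sumset X r \<oplus> H) + card (X \<oplus> H) \<le> card Y + card H"
      unfolding kneser_ineq_def using Yeq H_def by simp
    define X' where "X' = X \<oplus> H"
    have fX': "finite X'" using fX fH X'_def by simp
    have neX': "X' \<noteq> {}" using neX sumset_subgroup_sup[OF H] X'_def by blast
    have rsX': "iter_sumset X' r = iter_sumset X r \<oplus> H" using iter_sumset_periodize[OF H] False X'_def by simp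
    have stX': "stabilizer (iter_sumset X' r) = H"
    proof
      show "H \<subseteq> stabilizer (iter_sumset X' r)" using subgroup_sub_stabilizer_sumset[OF H] rsX' by simp
      have "iter_sumset X' r \<oplus> X' = Y \<oplus> H"
        using rsX' X'_def Yeq sumset_swap[of "iter_sumset X r" H X H] subgroup_sumset_self[OF H] by simp
      also have "\<dots> = Y" using sumset_stabilizer_self[of Y] H_def by simp
      finally have "iter_sumset X' r \<oplus> X' = Y" .
      thus "stabilizer (iter_sumset X' r) \<subseteq> H" using stabilizer_sumset_mono[of "iter_sumset X' r" X'] H_def by simp
    qed
    have ih: "r * card (X' \<oplus> H) \<le> card (iter_sumset X' r) + (r - 1) * card H"
      using Suc.IH[OF fX' neX'] False stX' by simp
    have "X' \<oplus> H = X \<oplus> H" using sumset_subgroup_idem[OF H] X'_def by simp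
    hence ih2: "r * card (X \<oplus> H) \<le> card (iter_sumset X r \<oplus> H) + (r - 1) * card H" using ih rsX' by simp
    have "Suc r * card (X \<oplus> H) = r * card (X \<oplus> H) + card (X \<oplus> H)" by simp
    also have "\<dots> \<le> card (iter_sumset X r \<oplus> H) + (r - 1) * card H + card (X \<oplus> H)" using ih2 by simp
    also have "\<dots> \<le> card Y + card H + (r - 1) * card H" using k by simp
    also have "\<dots> = card Y + (Suc r - 1) * card H" using False by (cases r) auto
    finally have fin: "Suc r * card (X \<oplus> H) \<le> card Y + (Suc r - 1) * card H" .
    show ?thesis using fin unfolding Y_def H_def .
  qed
qed

text \<open>A finite H-periodic set is a disjoint union of H-cosets, so |H| divides its
  size; cosets of distinct elements with non-H differences are disjoint.\<close>
lemma periodic_dvd: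
  fixes P H :: "'a::ab_group_add set"
  assumes H: "is_subgroup H" and fP: "finite P" and PH: "P \<oplus> H = P"
  shows "card H dvd card P"
proof -
  define CC where "CC = (\<lambda>x. coset x H) ` P"
  have U: "\<Union>CC = P"
  proof
    show "\<Union>CC \<subseteq> P" using periodic_coset[OF H PH] CC_def by blast
    show "P \<subseteq> \<Union>CC" using coset_self[OF H] CC_def by blast
  qed
  have fCC: "finite CC" using fP CC_def by simp
  have c1: "\<forall>c\<in>CC. card c = card H" using CC_def coset_card by auto
  have c2: "\<forall>c1\<in>CC. \<forall>c2\<in>CC. c1 \<noteq> c2 \<longrightarrow> c1 \<inter> c2 = {}" using coset_disj[OF H] CC_def by auto
  have "card H * card CC = card (\<Union>CC)"
    using card_partition[OF fCC _ ] U fP c1 c2 by simp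
  thus ?thesis using U by (metis dvd_triv_left)
qed



lemma coset_count:
  fixes H P Y :: "'a::ab_group_add set"
  assumes H: "is_subgroup H" and fH: "finite H" and fP: "finite P" and PH: "P \<oplus> H = P" and YP: "Y \<subseteq> P"
    and dist: "\<And>y y'. y \<in> Y \<Longrightarrow> y' \<in> Y \<Longrightarrow> y \<noteq> y' \<Longrightarrow> y' - y \<notin> H"
  shows "card Y * card H \<le> card P"
proof -
  have fY: "finite Y" using finite_subset[OF YP fP] .
  have disj: "\<forall>i\<in>Y. \<forall>j\<in>Y. i \<noteq> j \<longrightarrow> coset i H \<inter> coset j H = {}"
  proof (intro ballI impI)
    fix i j assume ij: "i \<in> Y" "j \<in> Y" "i \<noteq> j"
    have "j \<notin> coset i H" using dist[OF ij] coset_iff[OF H] by blast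
    hence "coset i H \<noteq> coset j H" using coset_self[OF H, of j] by blast
    thus "coset i H \<inter> coset j H = {}" using coset_disj[OF H] by blast
  qed
  have fin: "\<forall>i\<in>Y. finite (coset i H)" using fH unfolding coset_def by simp
  have "card (\<Union> ((\<lambda>i. coset i H) ` Y)) = (\<Sum>i\<in>Y. card (coset i H))"
    using card_UN_disjoint[OF fY fin disj] .
  also have "\<dots> = (\<Sum>i\<in>Y. card H)" by (rule sum.cong) (simp_all add: coset_card)
  also have "\<dots> = card Y * card H" by simp
  finally have e: "card (\<Union> ((\<lambda>i. coset i H) ` Y)) = card Y * card H" .
  have "\<Union> ((\<lambda>i. coset i H) ` Y) \<subseteq> P" using periodic_coset[OF H PH] YP by blast
  thus ?thesis using e card_mono[OF fP] by metis
qed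


section \<open>Z_m inside Q/Z\<close>

text \<open>Q/Z as a quotient type of the rationals; it is an abelian group, and
  n |-> n/m embeds Z_m into it as a subgroup, turning addition modulo m into
  addition.\<close>
definition int_diff :: "rat \<Rightarrow> rat \<Rightarrow> bool" where "int_diff x y \<longleftrightarrow> x - y \<in> \<int>"

lemma int_diff_equivp: "equivp int_diff"
proof (rule equivpI)
  show "reflp int_diff" unfolding reflp_def int_diff_def by simp
  show "symp int_diff" unfolding symp_def int_diff_def
  proof (intro allI impI)
    fix x y :: rat assume "x - y \<in> \<int>"
    hence "- (x - y) \<in> \<int>" by (rule Ints_minus)
    thus "y - x \<in> \<int>" by simp
  qed
  show "transp int_diff" unfolding transp_def int_diff_def
  proof (intro allI impI)
    fix x y z :: rat assume "x - y \<in> \<int>" "y - z \<in> \<int>"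
    hence "(x - y) + (y - z) \<in> \<int>" by (rule Ints_add)
    thus "x - z \<in> \<int>" by simp
  qed
qed

quotient_type qmodz = rat / int_diff by (rule int_diff_equivp)

instantiation qmodz :: ab_group_add
begin
lift_definition zero_qmodz :: qmodz is "0::rat" .
lift_definition plus_qmodz :: "qmodz \<Rightarrow> qmodz \<Rightarrow> qmodz" is "(+) :: rat \<Rightarrow> rat \<Rightarrow> rat"
proof -
  fix a b c d :: rat assume "int_diff a b" "int_diff c d"
  hence "(a - b) + (c - d) \<in> \<int>" unfolding int_diff_def by (rule Ints_add)
  thus "int_diff (a + c) (b + d)" unfolding int_diff_def by (simp add: algebra_simps)
qed
lift_definition uminus_qmodz :: "qmodz \<Rightarrow> qmodz" is "uminus :: rat \<Rightarrow> rat"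
proof -
  fix a b :: rat assume "int_diff a b"
  hence "- (a - b) \<in> \<int>" unfolding int_diff_def by (rule Ints_minus)
  thus "int_diff (- a) (- b)" unfolding int_diff_def by (simp add: algebra_simps)
qed
lift_definition minus_qmodz :: "qmodz \<Rightarrow> qmodz \<Rightarrow> qmodz" is "(-) :: rat \<Rightarrow> rat \<Rightarrow> rat"
proof -
  fix a b c d :: rat assume "int_diff a b" "int_diff c d"
  hence "(a - b) - (c - d) \<in> \<int>" unfolding int_diff_def by (rule Ints_diff)
  thus "int_diff (a - c) (b - d)" unfolding int_diff_def by (simp add: algebra_simps)
qed
instance
proof
  fix a b c :: qmodz
  show "a + b + c = a + (b + c)" by transfer (simp add: int_diff_def algebra_simps)
  show "a + b = b + a" by transfer (simp add: int_diff_def algebra_simps)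
  show "0 + a = a" by transfer (simp add: int_diff_def)
  show "- a + a = 0" by transfer (simp add: int_diff_def)
  show "a - b = a + - b" by transfer (simp add: int_diff_def)
qed
end

definition embed :: "nat \<Rightarrow> nat \<Rightarrow> qmodz" where
  "embed m n = abs_qmodz (of_nat n / of_nat m)"

lemma embed_add: "embed m (a + b) = embed m a + embed m b"
  unfolding embed_def by (simp add: plus_qmodz.abs_eq add_divide_distrib)

lemma embed_zero[simp]: "embed m 0 = 0"
  unfolding embed_def by (simp add: zero_qmodz_def)

lemma abs_qmodz_eq: "abs_qmodz x = abs_qmodz y \<longleftrightarrow> x - y \<in> \<int>"
  by (simp add: qmodz.abs_eq_iff int_diff_def)

lemma embed_mod: "0 < m \<Longrightarrow> embed m (a mod m) = embed m a"
proof -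
  assume m: "0 < m"
  have e0: "(of_nat a :: rat) = of_nat (a mod m + m * (a div m))" by simp
  have "of_nat a = (of_nat (a mod m) + of_nat m * of_nat (a div m) :: rat)"
    unfolding e0 by (simp only: of_nat_add of_nat_mult)
  hence "of_nat a / of_nat m = (of_nat (a mod m) / of_nat m + of_nat (a div m) :: rat)"
    using m by (simp add: field_simps)
  hence "of_nat (a mod m) / of_nat m - of_nat a / of_nat m = - (of_nat (a div m) :: rat)" by simp
  moreover have "- (of_nat (a div m) :: rat) \<in> \<int>" by (simp add: Ints_minus)
  ultimately show ?thesis unfolding embed_def abs_qmodz_eq by simp
qed

lemma embed_inj: "0 < m \<Longrightarrow> a < m \<Longrightarrow> b < m \<Longrightarrow> embed m a = embed m b \<Longrightarrow> a = b"
proof -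
  assume m: "0 < m" and a: "a < m" and b: "b < m" and e: "embed m a = embed m b"
  hence "(of_nat a / of_nat m - of_nat b / of_nat m :: rat) \<in> \<int>" unfolding embed_def abs_qmodz_eq by simp
  then obtain z :: int where z: "(of_nat a / of_nat m - of_nat b / of_nat m :: rat) = of_int z"
    by (auto elim: Ints_cases)
  hence z2: "(of_nat a - of_nat b :: rat) = of_int z * of_nat m" using m by (simp add: field_simps)
  have "(of_nat a - of_nat b :: rat) < of_nat m" "(of_nat a - of_nat b :: rat) > - of_nat m" using a b by linarith+
  hence "of_int z * of_nat m < (of_nat m :: rat)" "of_int z * of_nat m > - (of_nat m :: rat)" using z2 by simp_all
  hence "of_int z * of_nat m < (1::rat) * of_nat m" "(-1::rat) * of_nat m < of_int z * of_nat m" by simp_all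
  moreover have "(0::rat) < of_nat m" using m by simp
  ultimately have "of_int z < (1::rat)" "(-1 :: rat) < of_int z"
    using mult_less_cancel_right_pos by blast+
  hence "z = 0" by linarith
  thus "a = b" using z2 by simp
qed

lemma inj_embed: "0 < m \<Longrightarrow> inj_on (embed m) {0..<m}"
  using embed_inj by (auto simp: inj_on_def)



lemma embed_summod:
  assumes m: "0 < m"
  shows "embed m ` {(x + a) mod m | x a. x \<in> S \<and> a \<in> T} = (embed m ` S) \<oplus> (embed m ` T)"
proof
  show "embed m ` {(x + a) mod m | x a. x \<in> S \<and> a \<in> T} \<subseteq> (embed m ` S) \<oplus> (embed m ` T)"
  proof
    fix z assume "z \<in> embed m ` {(x + a) mod m | x a. x \<in> S \<and> a \<in> T}"
    then obtain x a where xa: "x \<in> S" "a \<in> T" "z = embed m ((x + a) mod m)" by blast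
    hence "z = embed m x + embed m a" using embed_mod[OF m] embed_add by simp
    thus "z \<in> (embed m ` S) \<oplus> (embed m ` T)" using xa by blast
  qed
  show "(embed m ` S) \<oplus> (embed m ` T) \<subseteq> embed m ` {(x + a) mod m | x a. x \<in> S \<and> a \<in> T}"
  proof
    fix z assume "z \<in> (embed m ` S) \<oplus> (embed m ` T)"
    then obtain x a where xa: "x \<in> S" "a \<in> T" "z = embed m x + embed m a" by (auto simp: sumset_iff)
    hence "z = embed m ((x + a) mod m)" using embed_mod[OF m] embed_add by simp
    thus "z \<in> embed m ` {(x + a) mod m | x a. x \<in> S \<and> a \<in> T}" using xa by blast
  qed
qed

lemma embed_iter: "0 < m \<Longrightarrow> embed m ` sumset_rho m A r = iter_sumset (embed m ` insert 0 A) r"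
proof (induction r)
  case 0 thus ?case by simp
next
  case (Suc r)
  show ?case using embed_summod[OF Suc.prems, of "sumset_rho m A r" "insert 0 A"] Suc by simp
qed

lemma sumset_rho_subset: "0 < m \<Longrightarrow> sumset_rho m A r \<subseteq> Zm m"
  by (induction r) (auto simp: Zm_def)

lemma card_embed: "0 < m \<Longrightarrow> S \<subseteq> Zm m \<Longrightarrow> card (embed m ` S) = card S"
proof -
  assume m: "0 < m" and S: "S \<subseteq> Zm m"
  have "inj_on (embed m) S" using inj_on_subset[OF inj_embed[OF m]] S by (simp add: Zm_def)
  thus ?thesis by (rule card_image)
qed

lemma embed_eq_iff: "0 < m \<Longrightarrow> S \<subseteq> Zm m \<Longrightarrow> T \<subseteq> Zm m \<Longrightarrow> embed m ` S = embed m ` T \<longleftrightarrow> S = T"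
proof -
  assume m: "0 < m" and S: "S \<subseteq> Zm m" and T: "T \<subseteq> Zm m"
  have "inj_on (embed m) (Zm m)" using inj_embed[OF m] by (simp add: Zm_def)
  thus ?thesis using inj_on_image_eq_iff S T by blast
qed

lemma embed_in_Zm: "0 < m \<Longrightarrow> embed m n \<in> embed m ` Zm m"
proof -
  assume m: "0 < m"
  have nm: "n mod m \<in> Zm m" using m by (simp add: Zm_def)
  have "embed m n = embed m (n mod m)" using embed_mod[OF m] by simp
  thus ?thesis using nm by blast
qed

lemma embed_neg: "0 < m \<Longrightarrow> s \<le> m \<Longrightarrow> - embed m s = embed m (m - s)"
proof -
  assume m: "0 < m" and s: "s \<le> m"
  have "embed m s + embed m (m - s) = embed m m" using embed_add[of m s "m - s"] s by simp
  also have "\<dots> = 0" using embed_mod[OF m, of m] by simp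
  finally have e: "embed m s + embed m (m - s) = 0" .
  have "- embed m s = - embed m s + (embed m s + embed m (m - s))" using e by simp
  also have "\<dots> = embed m (m - s)" by (simp add: add.assoc[symmetric])
  finally show ?thesis .
qed

lemma subgroup_embedded_Zm: "0 < m \<Longrightarrow> is_subgroup (embed m ` Zm m)"
proof -
  assume m: "0 < m"
  have "0 \<in> embed m ` Zm m" using embed_in_Zm[OF m, of 0] by simp
  moreover have "x + y \<in> embed m ` Zm m" if "x \<in> embed m ` Zm m" "y \<in> embed m ` Zm m" for x y
    using that embed_add embed_in_Zm[OF m] by (metis imageE)
  moreover have "- x \<in> embed m ` Zm m" if x: "x \<in> embed m ` Zm m" for x
  proof -
    obtain s where "s \<in> Zm m" "x = embed m s" using x by blast
    hence "- x = embed m (m - s)" using embed_neg[OF m] by (simp add: Zm_def)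
    thus ?thesis using embed_in_Zm[OF m] by simp
  qed
  ultimately show ?thesis unfolding is_subgroup_def by blast
qed

lemma embed_shift: "0 < m \<Longrightarrow> embed m ` ((\<lambda>x. (x + g) mod m) ` S) = (+) (embed m g) ` (embed m ` S)"
proof -
  assume m: "0 < m"
  have "embed m ((x + g) mod m) = embed m g + embed m x" for x
    using embed_mod[OF m] embed_add[of m x g] by (simp add: add.commute)
  hence "embed m ` ((\<lambda>x. (x + g) mod m) ` S) = (\<lambda>x. embed m g + embed m x) ` S"
    by (simp add: image_image)
  also have "\<dots> = (+) (embed m g) ` (embed m ` S)" by (simp add: image_image)
  finally show ?thesis .
qed

text \<open>The sets rho A_0 increase with rho, so diam^+_A(Z_m) >= rho means exactly
  that (rho - 1) A_0 is not all of Z_m; adjoining 0 to A changes nothing.\<close>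
lemma sumset_rho_mono: "0 < m \<Longrightarrow> sumset_rho m A r \<subseteq> sumset_rho m A (Suc r)"
proof
  fix x assume m: "0 < m" and x: "x \<in> sumset_rho m A r"
  have "x \<in> Zm m" using sumset_rho_subset[OF m, of A r] x by blast
  hence "x < m" by (simp add: Zm_def)
  hence "x = (x + 0) mod m \<and> x \<in> sumset_rho m A r \<and> (0::nat) \<in> insert 0 A" using x by simp
  thus "x \<in> sumset_rho m A (Suc r)" by (simp only: sumset_rho.simps) blast
qed

lemma sumset_rho_mono_le: "0 < m \<Longrightarrow> r \<le> r' \<Longrightarrow> sumset_rho m A r \<subseteq> sumset_rho m A r'"
  using lift_Suc_mono_le[of "sumset_rho m A" r r'] sumset_rho_mono by blast

lemma diam_ge_iff:
  assumes m: "0 < m" and r: "0 < \<rho>"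
  shows "enat \<rho> \<le> diam m A \<longleftrightarrow> sumset_rho m A (\<rho> - 1) \<noteq> Zm m"
proof
  assume d: "enat \<rho> \<le> diam m A"
  show "sumset_rho m A (\<rho> - 1) \<noteq> Zm m"
  proof
    assume e: "sumset_rho m A (\<rho> - 1) = Zm m"
    hence "diam m A = enat (LEAST r. sumset_rho m A r = Zm m)" unfolding diam_def by auto
    moreover have "(LEAST r. sumset_rho m A r = Zm m) \<le> \<rho> - 1" using e by (rule Least_le)
    ultimately show False using d r by simp
  qed
next
  assume ne: "sumset_rho m A (\<rho> - 1) \<noteq> Zm m"
  have lt: "sumset_rho m A r \<noteq> Zm m" if "r < \<rho>" for r
  proof
    assume e: "sumset_rho m A r = Zm m"
    have "sumset_rho m A r \<subseteq> sumset_rho m A (\<rho> - 1)" using sumset_rho_mono_le[OF m] that by simp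
    thus False using e ne sumset_rho_subset[OF m, of A "\<rho> - 1"] by blast
  qed
  show "enat \<rho> \<le> diam m A"
  proof (cases "\<exists>r. sumset_rho m A r = Zm m")
    case True
    hence "diam m A = enat (LEAST r. sumset_rho m A r = Zm m)" unfolding diam_def by simp
    moreover have "\<rho> \<le> (LEAST r. sumset_rho m A r = Zm m)"
    proof (rule ccontr)
      assume "\<not> \<rho> \<le> (LEAST r. sumset_rho m A r = Zm m)"
      hence "(LEAST r. sumset_rho m A r = Zm m) < \<rho>" by simp
      moreover have "sumset_rho m A (LEAST r. sumset_rho m A r = Zm m) = Zm m" using LeastI_ex[OF True] .
      ultimately show False using lt by blast
    qed
    ultimately show ?thesis by simp
  next
    case False thus ?thesis unfolding diam_def by simp
  qed
qed

lemma diam_fin_iff: "diam m A < \<infinity> \<longleftrightarrow> (\<exists>r. sumset_rho m A r = Zm m)"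
  unfolding diam_def by auto



lemma card_Zm[simp]: "card (Zm m) = m"
  by (simp add: Zm_def)

lemma zero_in_Zm: "0 < m \<Longrightarrow> 0 \<in> Zm m"
  by (simp add: Zm_def)

lemma sumset_rho_insert0: "sumset_rho m (insert 0 A) r = sumset_rho m A r"
  by (induction r) simp_all

lemma diam_insert0: "diam m (insert 0 A) = diam m A"
  unfolding diam_def sumset_rho_insert0 by simp

text \<open>Multiples of delta lying in a subgroup H of the embedded Z_m: the first
  (m - 1) div delta + 1 of them are distinct, so m <= |H| delta.\<close>
lemma multiple_in_subgroup:
  assumes m: "0 < m" and H: "is_subgroup H" and fH: "finite H" and d1: "1 \<le> \<delta>" and dH: "embed m \<delta> \<in> H"
  shows "m \<le> card H * \<delta>"
proof -
  define q where "q = (m - 1) div \<delta> + 1"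
  define M where "M = (\<lambda>l. l * \<delta>) ` {..<q}"
  have inH: "embed m (l * \<delta>) \<in> H" for l
  proof (induction l)
    case 0 thus ?case using H unfolding is_subgroup_def by simp
  next
    case (Suc l)
    have "embed m (Suc l * \<delta>) = embed m (l * \<delta>) + embed m \<delta>" using embed_add[of m "l * \<delta>" \<delta>] by (simp add: add.commute)
    thus ?case using Suc dH H unfolding is_subgroup_def by simp
  qed
  have MZ: "M \<subseteq> Zm m"
  proof
    fix x assume "x \<in> M"
    then obtain l where l: "l < q" "x = l * \<delta>" using M_def by blast
    have "l \<le> (m - 1) div \<delta>" using l q_def by simp
    hence "l * \<delta> \<le> (m - 1) div \<delta> * \<delta>" by (rule mult_le_mono1)
    also have "\<dots> \<le> m - 1" using div_mult_mod_eq[of "m - 1" \<delta>] by linarith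
    finally show "x \<in> Zm m" using l m by (simp add: Zm_def)
  qed
  have cM: "card M = q"
  proof -
    have "inj_on (\<lambda>l. l * \<delta>) {..<q}" using d1 by (auto simp: inj_on_def)
    thus ?thesis using M_def card_image by fastforce
  qed
  have "embed m ` M \<subseteq> H" using inH M_def by auto
  hence "card (embed m ` M) \<le> card H" using card_mono[OF fH] by blast
  hence qH: "q \<le> card H" using card_embed[OF m MZ] cM by simp
  have "m - 1 < q * \<delta>"
  proof -
    have e: "(m - 1) div \<delta> * \<delta> + (m - 1) mod \<delta> = m - 1" by (rule div_mult_mod_eq)
    moreover have "(m - 1) mod \<delta> < \<delta>" using d1 by simp
    moreover have "q * \<delta> = (m - 1) div \<delta> * \<delta> + \<delta>" using q_def by (simp add: algebra_simps)
    ultimately show ?thesis by linarith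
  qed
  hence "m \<le> q * \<delta>" by simp
  also have "\<dots> \<le> card H * \<delta>" using qH by (rule mult_le_mono1)
  finally show ?thesis .
qed

lemma shift_cancel:
  fixes a b g m :: nat
  assumes m: "0 < m" and a: "a < m" and b: "b < m" and e: "(a + g) mod m = (b + g) mod m"
  shows "a = b"
proof -
  have "embed m ((a + g) mod m) = embed m ((b + g) mod m)" using e by simp
  hence "embed m a + embed m g = embed m b + embed m g" using embed_mod[OF m] embed_add by simp
  hence "embed m a = embed m b" by simp
  thus ?thesis using embed_inj[OF m a b] by simp
qed


section \<open>Upper bounds\<close>

text \<open>Then H is a subgroup of the embedded
  Z_m, so |H| divides m, and writing |X + H| = c |H|, the iterated Kneser
  inequality together with |hX| < m gives h (c - 1) + 2 <= m / |H|.\<close>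
lemma stabilizer_bound:
  assumes m: "0 < m" and A: "A \<subseteq> Zm m" and h: "0 < h" and ne: "sumset_rho m A h \<noteq> Zm m"
  defines "X \<equiv> embed m ` insert 0 A"
  defines "H \<equiv> stabilizer (iter_sumset X h)"
  shows "is_subgroup H" and "finite H" and "H \<subseteq> embed m ` Zm m" and "card H dvd m"
    and "iter_sumset X h \<noteq> embed m ` Zm m" and "H \<noteq> embed m ` Zm m"
    and "\<exists>c. card (X \<oplus> H) = c * card H \<and> 1 \<le> c \<and> h * (c - 1) + 2 \<le> m div card H"
proof -
  define Z where "Z = embed m ` Zm m"
  have Z: "is_subgroup Z" using subgroup_embedded_Zm[OF m] Z_def by simp
  have fZ: "finite Z" using Z_def by (simp add: Zm_def)
  have cZ: "card Z = m" using card_embed[OF m, of "Zm m"] Z_def by simp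
  have fX: "finite X" using X_def finite_subset[OF A] by (simp add: Zm_def)
  have neX: "X \<noteq> {}" using X_def by simp
  have S: "iter_sumset X h = embed m ` sumset_rho m A h" using embed_iter[OF m] X_def by simp
  have SZ: "iter_sumset X h \<subseteq> Z" using S sumset_rho_subset[OF m] Z_def by blast
  have SneZ: "iter_sumset X h \<noteq> Z"
    using S embed_eq_iff[OF m sumset_rho_subset[OF m] subset_refl] ne Z_def by simp
  have fS: "finite (iter_sumset X h)" using iter_finite[OF fX] .
  have neS: "iter_sumset X h \<noteq> {}" using iter_ne[OF neX] .
  have H: "is_subgroup H" using subgroup_stabilizer H_def by simp
  have fH: "finite H" using stabilizer_finite[OF fS neS] H_def by simp
  have HZ: "H \<subseteq> Z" using stabilizer_sub_subgroup[OF Z SZ neS] H_def by simp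
  have cH: "0 < card H" using subgroup_card_pos[OF H fH] .
  have ZH: "Z \<oplus> H = Z" using subgroup_closed[OF Z subset_refl HZ] sumset_subgroup_sup[OF H] by blast
  have dvdm: "card H dvd m" using periodic_dvd[OF H fZ ZH] cZ by simp
  show "is_subgroup H" "finite H" "H \<subseteq> embed m ` Zm m" "card H dvd m"
    "iter_sumset X h \<noteq> embed m ` Zm m"
    using H fH HZ dvdm SneZ Z_def by simp_all
  have SH: "iter_sumset X h \<oplus> H = iter_sumset X h" using sumset_stabilizer_self H_def by simp
  have HS: "H \<subseteq> iter_sumset X h"
  proof
    fix g assume "g \<in> H"
    have "0 \<in> X" using X_def by simp
    from sumset_I[OF zero_in_iter[OF this, of h] \<open>g \<in> H\<close>] show "g \<in> iter_sumset X h" using SH by simp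
  qed
  show "H \<noteq> embed m ` Zm m" using HS SZ SneZ Z_def by blast
  obtain d where d: "m = card H * d" using dvdm by (auto elim: dvdE)
  obtain c where c: "card (X \<oplus> H) = card H * c"
    using periodic_dvd[OF H sumset_finite[OF fX fH] sumset_subgroup_idem[OF H]] by (auto elim: dvdE)
  obtain e where e: "card (iter_sumset X h) = card H * e"
    using periodic_dvd[OF H fS SH] by (auto elim: dvdE)
  have "card (iter_sumset X h) < card Z" using psubset_card_mono[OF fZ] SZ SneZ by blast
  hence ed: "e < d" using e d cZ cH by simp
  have c1: "1 \<le> c"
  proof -
    have "X \<oplus> H \<noteq> {}" using sumset_ne[OF neX] H unfolding is_subgroup_def by blast
    hence "0 < card (X \<oplus> H)" using sumset_finite[OF fX fH] by (simp add: card_gt_0_iff)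
    thus ?thesis using c by (cases c) auto
  qed
  have "h * card (X \<oplus> H) \<le> card (iter_sumset X h) + (h - 1) * card H"
    using kneser_iterated[OF fX neX h] H_def by simp
  hence "card H * (h * c) \<le> card H * (e + (h - 1))" using c e by (simp add: algebra_simps)
  hence hc: "h * c \<le> e + (h - 1)" using cH by simp
  have "h * (c - 1) + 2 \<le> d"
  proof -
    obtain c' where c': "c = Suc c'" using c1 by (cases c) auto
    have "h * c = h * c' + h" using c' by simp
    thus ?thesis using hc ed c' h by simp
  qed
  thus "\<exists>c. card (X \<oplus> H) = c * card H \<and> 1 \<le> c \<and> h * (c - 1) + 2 \<le> m div card H"
    using c c1 d cH by (auto simp: mult.commute)
qed

text \<open>A rho-maximal set contains 0, since adjoining 0 does not change its sumsets.\<close>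
lemma maximal_has0:
  assumes m: "0 < m" and mx: "rho_maximal m \<rho> A"
  shows "0 \<in> A"
proof (rule ccontr)
  assume n0: "0 \<notin> A"
  have "A \<subset> insert 0 A" using n0 by blast
  moreover have "insert 0 A \<subseteq> Zm m" using mx zero_in_Zm[OF m] unfolding rho_maximal_def by simp
  moreover have "enat \<rho> \<le> diam m (insert 0 A)" using mx diam_insert0 unfolding rho_maximal_def by simp
  ultimately show False using mx unfolding rho_maximal_def by blast
qed

text \<open>For a rho-maximal set A with image X, adjoining the whole stabilizer H of
  (rho - 1) X does not change the (rho - 1)-fold sumset, so by maximality X is
  already H-periodic.\<close>
lemma maximal_periodic:
  assumes m: "0 < m" and r: "2 \<le> \<rho>" and mx: "rho_maximal m \<rho> A"
  defines "X \<equiv> embed m ` A"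
  defines "H \<equiv> stabilizer (iter_sumset X (\<rho> - 1))"
  shows "X \<oplus> H = X"
proof -
  have h: "0 < \<rho> - 1" using r by simp
  have A: "A \<subseteq> Zm m" using mx unfolding rho_maximal_def by simp
  have A0: "0 \<in> A" using maximal_has0[OF m mx] .
  have XA: "embed m ` insert 0 A = X" using A0 X_def by (simp add: insert_absorb)
  have ne: "sumset_rho m A (\<rho> - 1) \<noteq> Zm m"
    using diam_ge_iff[OF m, of \<rho> A] r mx unfolding rho_maximal_def by simp
  have H: "is_subgroup H" and HZ: "H \<subseteq> embed m ` Zm m"
    and SZ: "iter_sumset X (\<rho> - 1) \<noteq> embed m ` Zm m"
    using stabilizer_bound(1,3,5)[OF m A h ne] XA H_def by simp_all
  have XZ: "X \<subseteq> embed m ` Zm m" using A X_def by blast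
  define A' where "A' = {a \<in> Zm m. embed m a \<in> X \<oplus> H}"
  have XHZ: "X \<oplus> H \<subseteq> embed m ` Zm m" using subgroup_closed[OF subgroup_embedded_Zm[OF m] XZ HZ] .
  have imA': "embed m ` A' = X \<oplus> H" using XHZ A'_def by blast
  have AA': "A \<subseteq> A'"
  proof
    fix a assume a: "a \<in> A"
    hence "embed m a \<in> X \<oplus> H" using sumset_subgroup_sup[OF H] X_def by blast
    thus "a \<in> A'" using a A A'_def by blast
  qed
  have iA': "insert 0 A' = A'" using A0 AA' by blast
  have "embed m ` sumset_rho m A' (\<rho> - 1) = iter_sumset (X \<oplus> H) (\<rho> - 1)"
    using embed_iter[OF m, of A' "\<rho> - 1"] iA' imA' by simp
  also have "\<dots> = iter_sumset X (\<rho> - 1) \<oplus> H" using iter_sumset_periodize[OF H h] .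
  also have "\<dots> = iter_sumset X (\<rho> - 1)" using sumset_stabilizer_self H_def by simp
  finally have "sumset_rho m A' (\<rho> - 1) \<noteq> Zm m" using SZ by auto
  hence "enat \<rho> \<le> diam m A'" using diam_ge_iff[OF m, of \<rho> A'] r by simp
  hence "\<not> A \<subset> A'" using mx A'_def unfolding rho_maximal_def by blast
  hence "A' = A" using AA' by blast
  thus ?thesis using imA' X_def by simp
qed

lemma aperiodic_trivial_period:
  assumes m: "0 < m" and A: "A \<subseteq> Zm m" and ap: "aperiodic m A"
    and H: "is_subgroup H" and HZ: "H \<subseteq> embed m ` Zm m" and XH: "embed m ` A \<oplus> H = embed m ` A"
  shows "H = {0}"
proof -
  have fX: "finite (embed m ` A)" using finite_subset[OF A] by (simp add: Zm_def)
  have Hstab: "H \<subseteq> stabilizer (embed m ` A)" using periodic_iff[OF H fX] XH by simp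
  have "H \<subseteq> {0}"
  proof
    fix y assume y: "y \<in> H"
    then obtain g where g: "g \<in> Zm m" "y = embed m g" using HZ by blast
    have "(+) y ` embed m ` A = embed m ` A" using Hstab y unfolding stabilizer_def by blast
    hence "embed m ` ((\<lambda>x. (x + g) mod m) ` A) = embed m ` A" using embed_shift[OF m] g by simp
    moreover have "(\<lambda>x. (x + g) mod m) ` A \<subseteq> Zm m" using m by (auto simp: Zm_def)
    ultimately have "(\<lambda>x. (x + g) mod m) ` A = A" using embed_eq_iff[OF m _ A] by blast
    hence "g \<in> period m A" using g unfolding period_def by simp
    thus "y \<in> {0}" using ap g unfolding aperiodic_def by simp
  qed
  thus ?thesis using H unfolding is_subgroup_def by blast
qed

text \<open>Upper bound for t_rho: for an aperiodic rho-maximal set the stabilizer in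
  the key estimate is trivial, so (rho - 1)(|A| - 1) + 2 <= m.\<close>
lemma t_upper:
  assumes m: "0 < m" and r: "2 \<le> \<rho>" and ap: "aperiodic m A" and mx: "rho_maximal m \<rho> A"
  shows "card A \<le> (m - 2) div (\<rho> - 1) + 1"
proof -
  have A: "A \<subseteq> Zm m" using mx unfolding rho_maximal_def by simp
  have h: "0 < \<rho> - 1" using r by simp
  have XA: "embed m ` insert 0 A = embed m ` A" using maximal_has0[OF m mx] by (simp add: insert_absorb)
  have ne: "sumset_rho m A (\<rho> - 1) \<noteq> Zm m"
    using diam_ge_iff[OF m, of \<rho> A] r mx unfolding rho_maximal_def by simp
  let ?H = "stabilizer (iter_sumset (embed m ` A) (\<rho> - 1))"
  note sb = stabilizer_bound[OF m A h ne, unfolded XA]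
  have H0: "?H = {0}"
    using aperiodic_trivial_period[OF m A ap sb(1) sb(3) maximal_periodic[OF m r mx]] .
  obtain c where c: "card (embed m ` A \<oplus> ?H) = c * card ?H" "(\<rho> - 1) * (c - 1) + 2 \<le> m div card ?H"
    using sb(7) by blast
  have "c = card A" using c(1) H0 card_embed[OF m A] by simp
  hence "(\<rho> - 1) * (card A - 1) \<le> m - 2" using c(2) H0 by simp
  hence "card A - 1 \<le> (m - 2) div (\<rho> - 1)"
    using h by (simp add: less_eq_div_iff_mult_less_eq mult.commute)
  thus ?thesis by simp
qed

text \<open>A set of finite diameter is not contained in a proper subgroup of the
  embedded Z_m, since its iterated sumsets eventually fill Z_m.\<close>
lemma finite_diam_not_in_subgroup:
  assumes m: "0 < m" and fin: "diam m A < \<infinity>" and H: "is_subgroup H"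
    and HZ: "H \<subseteq> embed m ` Zm m" and HnZ: "H \<noteq> embed m ` Zm m"
  shows "\<not> embed m ` insert 0 A \<subseteq> H"
proof
  assume XH: "embed m ` insert 0 A \<subseteq> H"
  obtain r where "sumset_rho m A r = Zm m" using fin diam_fin_iff by blast
  hence "iter_sumset (embed m ` insert 0 A) r = embed m ` Zm m" using embed_iter[OF m] by metis
  thus False using iter_sumset_in_subgroup[OF H XH, of r] HZ HnZ by blast
qed

text \<open>Upper bound for s_rho: in the key estimate c >= 2 because A has finite
  diameter, so d = m / |H| is a divisor of m with d >= rho + 1, and |A| <= c |H|.\<close>
lemma s_upper:
  assumes m: "0 < m" and r: "2 \<le> \<rho>" and A: "A \<subseteq> Zm m"
    and d1: "enat \<rho> \<le> diam m A" and d2: "diam m A < \<infinity>"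
  shows "\<exists>d. d dvd m \<and> \<rho> + 1 \<le> d \<and> card A \<le> (m div d) * ((d - 2) div (\<rho> - 1) + 1)"
proof -
  have h: "0 < \<rho> - 1" using r by simp
  have ne: "sumset_rho m A (\<rho> - 1) \<noteq> Zm m" using diam_ge_iff[OF m, of \<rho> A] r d1 by simp
  define X where "X = embed m ` insert 0 A"
  define H where "H = stabilizer (iter_sumset X (\<rho> - 1))"
  note sb = stabilizer_bound[OF m A h ne, folded X_def, folded H_def]
  have H: "is_subgroup H" and fH: "finite H" and HZ: "H \<subseteq> embed m ` Zm m"
    and dvdm: "card H dvd m" using sb(1-4) .
  obtain c where c: "card (X \<oplus> H) = c * card H" "1 \<le> c" "(\<rho> - 1) * (c - 1) + 2 \<le> m div card H"
    using sb(7) by blast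
  have fX: "finite X" using X_def finite_subset[OF A] by (simp add: Zm_def)
  have X0: "0 \<in> X" using X_def by simp
  have HnZ: "H \<noteq> embed m ` Zm m" using sb(6) .
  have c2: "2 \<le> c"
  proof (rule ccontr)
    assume "\<not> 2 \<le> c"
    hence cXH: "card H = card (X \<oplus> H)" using c by simp
    have HXH: "H \<subseteq> X \<oplus> H"
    proof
      fix g assume "g \<in> H"
      from sumset_I[OF X0 this] show "g \<in> X \<oplus> H" by simp
    qed
    have "X \<oplus> H = H" using card_subset_eq[OF sumset_finite[OF fX fH] HXH cXH] by simp
    hence "X \<subseteq> H" using sumset_subgroup_sup[OF H, of X] by simp
    thus False using finite_diam_not_in_subgroup[OF m d2 H HZ HnZ] X_def by simp
  qed
  define d where "d = m div card H"
  have md: "m = d * card H" using dvdm d_def by simp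
  have dge: "\<rho> + 1 \<le> d"
  proof -
    have "(\<rho> - 1) * 1 \<le> (\<rho> - 1) * (c - 1)" using c2 by (intro mult_le_mono2) simp
    thus ?thesis using c(3) d_def r by linarith
  qed
  have cHd: "card H = m div d" using md dge by simp
  have "card A \<le> card X" using card_embed[OF m, of "insert 0 A"] A zero_in_Zm[OF m] X_def
    finite_subset[OF A] by (simp add: Zm_def card_insert_le)
  also have "\<dots> \<le> card (X \<oplus> H)" using card_mono[OF sumset_finite[OF fX fH] sumset_subgroup_sup[OF H]] .
  also have "\<dots> = c * card H" using c by simp
  also have "\<dots> \<le> ((d - 2) div (\<rho> - 1) + 1) * card H"
  proof (intro mult_le_mono1)
    have "(\<rho> - 1) * (c - 1) \<le> d - 2" using c(3) d_def by simp
    hence "c - 1 \<le> (d - 2) div (\<rho> - 1)" using h by (simp add: less_eq_div_iff_mult_less_eq mult.commute)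
    thus "c \<le> (d - 2) div (\<rho> - 1) + 1" by simp
  qed
  finally have "card A \<le> (m div d) * ((d - 2) div (\<rho> - 1) + 1)" using cHd by (simp add: mult.commute)
  moreover have "d dvd m" using md by simp
  ultimately show ?thesis using dge by blast
qed

section \<open>Extremal sets\<close>

lemma interval_sumset: "0 < m \<Longrightarrow> sumset_rho m {0..k} r \<subseteq> {x. x \<le> r * k}"
proof (induction r)
  case 0 thus ?case by simp
next
  case (Suc r)
  show ?case
  proof
    fix z assume "z \<in> sumset_rho m {0..k} (Suc r)"
    then obtain x a where xa: "z = (x + a) mod m" "x \<in> sumset_rho m {0..k} r" "a \<in> insert 0 {0..k}" by auto
    have "x \<le> r * k" using xa(2) Suc by blast
    moreover have "a \<le> k" using xa(3) by auto
    moreover have "z \<le> x + a" using xa(1) by simp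
    ultimately show "z \<in> {x. x \<le> Suc r * k}" by simp
  qed
qed

lemma one_gen_sumset:
  assumes m: "1 < m" and one: "1 \<in> A"
  shows "{0..min r (m - 1)} \<subseteq> sumset_rho m A r"
proof (induction r)
  case 0 thus ?case using m by simp
next
  case (Suc r)
  show ?case
  proof
    fix n assume n: "n \<in> {0..min (Suc r) (m - 1)}"
    show "n \<in> sumset_rho m A (Suc r)"
    proof (cases "n \<le> r")
      case True
      hence "n \<in> sumset_rho m A r" using Suc n by auto
      thus ?thesis using sumset_rho_mono[of m A r] m by auto
    next
      case False
      hence nr: "n = Suc r" and rm: "r < m - 1" using n by auto
      have "r \<in> sumset_rho m A r" using Suc rm by auto
      moreover have "(r + 1) mod m = n" using nr rm by simp
      ultimately have "n = (r + 1) mod m \<and> r \<in> sumset_rho m A r \<and> (1::nat) \<in> insert 0 A" using one by simp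
      thus ?thesis by (simp only: sumset_rho.simps) blast
    qed
  qed
qed

lemma one_fin_diam:
  assumes m: "1 < m" and one: "1 \<in> A" and A: "A \<subseteq> Zm m"
  shows "diam m A < \<infinity>"
proof -
  have "Zm m \<subseteq> sumset_rho m A (m - 1)" using one_gen_sumset[OF m one, of "m - 1"] m
    by (auto simp: Zm_def)
  hence "sumset_rho m A (m - 1) = Zm m" using sumset_rho_subset[of m A "m - 1"] m by auto
  thus ?thesis using diam_fin_iff by blast
qed



text \<open>The first n residues lie in distinct cosets of a subgroup H of the embedded
  Z_m as long as n |H| <= m, so an H-periodic set containing them has at least
  n |H| elements.\<close>
lemma initial_segment_card:
  assumes m: "0 < m" and H: "is_subgroup H" and fH: "finite H" and fP: "finite P"
    and PH: "P \<oplus> H = P" and nP: "embed m ` {0..<n} \<subseteq> P" and nH: "n * card H \<le> m"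
  shows "n * card H \<le> card P"
proof -
  have cH: "0 < card H" using subgroup_card_pos[OF H fH] .
  have noH: "embed m \<delta> \<notin> H" if "1 \<le> \<delta>" "\<delta> < n" for \<delta>
  proof
    assume "embed m \<delta> \<in> H"
    hence "m \<le> card H * \<delta>" using multiple_in_subgroup[OF m H fH that(1)] by simp
    moreover have "card H * \<delta> < card H * n" using that(2) cH by simp
    moreover have "card H * n \<le> m" using nH by (simp add: mult.commute)
    ultimately show False by linarith
  qed
  have "n \<le> m" using le_trans[OF mult_le_mono2[of 1 "card H" n] nH] cH by simp
  hence nZ: "{0..<n} \<subseteq> Zm m" by (auto simp: Zm_def)
  have dist: "y' - y \<notin> H" if yy: "y \<in> embed m ` {0..<n}" "y' \<in> embed m ` {0..<n}" "y \<noteq> y'" for y y'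
  proof -
    obtain i j where ij: "i < n" "j < n" "y = embed m i" "y' = embed m j" using yy by auto
    have "i \<noteq> j" using ij yy by auto
    show ?thesis
    proof (cases "i < j")
      case True
      have "embed m j = embed m i + embed m (j - i)" using embed_add[of m i "j - i"] True by simp
      hence "y' - y = embed m (j - i)" using ij by (simp add: algebra_simps)
      thus ?thesis using noH[of "j - i"] True ij by simp
    next
      case False
      hence ji: "j < i" using \<open>i \<noteq> j\<close> by simp
      have "embed m i = embed m j + embed m (i - j)" using embed_add[of m j "i - j"] ji by simp
      hence e: "y' - y = - embed m (i - j)" using ij by (simp add: algebra_simps)
      have "embed m (i - j) \<notin> H" using noH[of "i - j"] ji ij by simp
      thus ?thesis using e H unfolding is_subgroup_def by (metis minus_minus)
    qed
  qed
  have "card (embed m ` {0..<n}) * card H \<le> card P" using coset_count[OF H fH fP PH nP dist] .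
  thus ?thesis using card_embed[OF m nZ] by simp
qed

text \<open>The interval {0..k} with 1 <= k <= m - 2 is aperiodic: a nonzero period g
  would map the residue m - 1, which is not in the interval, onto g - 1.\<close>
lemma interval_aperiodic:
  assumes km: "k + 2 \<le> m"
  shows "aperiodic m {0..k}"
  unfolding aperiodic_def
proof
  have m0: "0 < m" using km by simp
  show "period m {0..k} \<subseteq> {0}"
  proof
    fix g assume g: "g \<in> period m {0..k}"
    hence gZ: "g < m" and im: "(\<lambda>x. (x + g) mod m) ` {0..k} = {0..k}"
      unfolding period_def by (auto simp: Zm_def)
    have "(0 + g) mod m \<in> {0..k}" using im by (metis atLeastAtMost_iff image_eqI le0)
    hence gk: "g \<le> k" using gZ by simp
    show "g \<in> {0}"
    proof (rule ccontr)
      assume "g \<notin> {0}"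
      hence g1: "1 \<le> g" by simp
      have "(m - 1 + g) mod m = ((g - 1) + m) mod m" using g1 m0 by (simp add: algebra_simps)
      also have "\<dots> = g - 1" using gZ by simp
      finally have "(m - 1 + g) mod m \<in> (\<lambda>x. (x + g) mod m) ` {0..k}" using im gk by simp
      then obtain i where i: "i \<le> k" "(m - 1 + g) mod m = (i + g) mod m" by auto
      hence "m - 1 = i" using shift_cancel[OF m0 _ _ i(2)] km by simp
      thus False using i km by simp
    qed
  qed
  have "(\<lambda>x. (x + 0) mod m) ` {0..k} = {0..k}" using km by (auto simp: image_iff)
  thus "{0} \<subseteq> period m {0..k}" unfolding period_def using m0 by (simp add: Zm_def)
qed

text \<open>An interval containing 1 generates Z_m: a subgroup containing 1 contains
  every residue.\<close>
lemma interval_generates: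
  assumes k1: "1 \<le> k" and km: "k < m"
  shows "generates m {0..k}"
  unfolding generates_def
proof (intro conjI allI impI)
  show "{0..k} \<subseteq> Zm m" using km by (auto simp: Zm_def)
  fix H assume H: "H \<subseteq> Zm m \<and> 0 \<in> H \<and> (\<forall>x\<in>H. \<forall>y\<in>H. (x + y) mod m \<in> H)
                    \<and> (\<forall>x\<in>H. (m - x) mod m \<in> H) \<and> {0..k} \<subseteq> H"
  have one: "1 \<in> H" using H k1 by auto
  have "n \<in> H" if "n < m" for n
    using that
  proof (induction n)
    case 0 thus ?case using H by simp
  next
    case (Suc n)
    hence "n \<in> H" by simp
    hence "(n + 1) mod m \<in> H" using H one by blast
    thus ?case using Suc.prems by simp
  qed
  thus "H = Zm m" using H by (auto simp: Zm_def)
qed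

lemma interval_length:
  fixes h m :: nat
  assumes h: "1 \<le> h" and m: "h + 2 \<le> m"
  defines "k \<equiv> (m - 2) div h"
  shows "1 \<le> k" and "h * k \<le> m - 2" and "m - 2 < (k + 1) * h" and "k + 2 \<le> m"
proof -
  show "1 \<le> k" using h m k_def by (simp add: less_eq_div_iff_mult_less_eq)
  show hk: "h * k \<le> m - 2" using k_def div_mult_mod_eq[of "m - 2" h] by (simp add: mult.commute)
  have "(m - 2) div h * h + (m - 2) mod h = m - 2" by (rule div_mult_mod_eq)
  moreover have "(m - 2) mod h < h" using h by simp
  moreover have "(k + 1) * h = (m - 2) div h * h + h" using k_def by (simp add: algebra_simps)
  ultimately show "m - 2 < (k + 1) * h" by linarith
  have "1 * k \<le> h * k" using h by (rule mult_le_mono1)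
  thus "k + 2 \<le> m" using hk m by linarith
qed

text \<open>The interval {0..k}, k = (m - 2) div (rho - 1), has diameter at least rho:
  its (rho - 1)-fold sumset misses m - 1.\<close>
lemma interval_diam:
  assumes r: "2 \<le> \<rho>" and m: "\<rho> + 1 \<le> m"
  defines "k \<equiv> (m - 2) div (\<rho> - 1)"
  shows "enat \<rho> \<le> diam m {0..k}"
proof -
  have m0: "0 < m" using m by simp
  have hk: "(\<rho> - 1) * k \<le> m - 2" using interval_length(2)[of "\<rho> - 1" m] r m k_def by simp
  have "sumset_rho m {0..k} (\<rho> - 1) \<subseteq> {x. x \<le> (\<rho> - 1) * k}" using interval_sumset[OF m0] by blast
  moreover have "\<not> m - 1 \<le> (\<rho> - 1) * k" using hk m r by simp
  moreover have "m - 1 \<in> Zm m" using m0 by (simp add: Zm_def)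
  ultimately have "sumset_rho m {0..k} (\<rho> - 1) \<noteq> Zm m" by blast
  thus ?thesis using diam_ge_iff[OF m0, of \<rho> "{0..k}"] r by simp
qed

text \<open>No set strictly containing the interval {0..k} has diameter at least rho:
  in the key estimate for such a set B, the initial segment of B forces
  c >= k + 1, which leaves room only for the trivial stabilizer, and then
  |B| <= k + 1.\<close>
lemma interval_superset_diam:
  assumes r: "2 \<le> \<rho>" and m: "\<rho> + 1 \<le> m"
  defines "k \<equiv> (m - 2) div (\<rho> - 1)"
  assumes IB: "{0..k} \<subset> B" and BZ: "B \<subseteq> Zm m"
  shows "\<not> enat \<rho> \<le> diam m B"
proof
  define h where "h = \<rho> - 1"
  have h: "1 \<le> h" using r h_def by simp
  have m0: "0 < m" using m by simp
  have kdef: "k = (m - 2) div h" using k_def h_def by simp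
  note len = interval_length[of h m, folded kdef]
  have k1: "1 \<le> k" and hk2: "m - 2 < (k + 1) * h" using len h m h_def by auto
  assume dB: "enat \<rho> \<le> diam m B"
  have ne: "sumset_rho m B h \<noteq> Zm m" using diam_ge_iff[OF m0, of \<rho> B] dB r h_def by simp
  have "0 \<in> B" using IB by auto
  hence XB: "embed m ` insert 0 B = embed m ` B" by (simp add: insert_absorb)
  define H where "H = stabilizer (iter_sumset (embed m ` B) h)"
  note sb = stabilizer_bound[OF m0 BZ _ ne, unfolded XB, folded H_def]
  have H: "is_subgroup H" and fH: "finite H" and dvdm: "card H dvd m" using sb(1,2,4) h by auto
  obtain c where c: "card (embed m ` B \<oplus> H) = c * card H" "1 \<le> c" "h * (c - 1) + 2 \<le> m div card H"
    using sb(7) h by auto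
  have cH: "0 < card H" using subgroup_card_pos[OF H fH] .
  define d where "d = m div card H"
  have md: "m = d * card H" using dvdm d_def by simp
  have fB: "finite B" using finite_subset[OF BZ] by (simp add: Zm_def)
  define n where "n = min (k + 1) d"
  have "n * card H \<le> card (embed m ` B \<oplus> H)"
  proof (rule initial_segment_card[OF m0 H fH _ sumset_subgroup_idem[OF H]])
    show "finite (embed m ` B \<oplus> H)" using fB fH by simp
    have "{0..<n} \<subseteq> B" using IB n_def by auto
    thus "embed m ` {0..<n} \<subseteq> embed m ` B \<oplus> H" using sumset_subgroup_sup[OF H] by blast
    show "n * card H \<le> m" using md n_def by simp
  qed
  hence nc: "n \<le> c" using c cH by simp
  have "c - 1 \<le> h * (c - 1)" using h by simp
  hence "c < d" using c(2,3) d_def by linarith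
  hence kc: "k + 1 \<le> c" using nc n_def by auto
  have hkd: "h * k + 2 \<le> d"
  proof -
    have "h * k \<le> h * (c - 1)" using kc by (intro mult_le_mono2) simp
    thus ?thesis using c(3) d_def by linarith
  qed
  have H0: "H = {0}"
  proof -
    have "card H \<le> 1"
    proof (rule ccontr)
      assume "\<not> card H \<le> 1"
      hence "2 * d \<le> m" using md by simp
      moreover have "h * 1 \<le> h * k" using k1 by (rule mult_le_mono2)
      moreover have "(k + 1) * h = h * k + h" by (simp add: algebra_simps)
      ultimately show False using hkd hk2 by linarith
    qed
    moreover have "0 \<in> H" using H unfolding is_subgroup_def by blast
    ultimately show ?thesis using card_le_Suc0_iff_eq[OF fH] by auto
  qed
  have "c = card B" using c(1) H0 card_embed[OF m0 BZ] by simp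
  hence "h * (card B - 1) \<le> m - 2" using c(3) H0 by simp
  hence "card B - 1 \<le> k" using h kdef by (simp add: less_eq_div_iff_mult_less_eq mult.commute)
  moreover have "k + 1 < card B" using psubset_card_mono[OF fB IB] by simp
  ultimately show False by simp
qed

lemma interval_rho_maximal:
  assumes r: "2 \<le> \<rho>" and m: "\<rho> + 1 \<le> m"
  defines "k \<equiv> (m - 2) div (\<rho> - 1)"
  shows "rho_maximal m \<rho> {0..k}"
proof -
  have "k + 2 \<le> m" using interval_length(4)[of "\<rho> - 1" m] r m k_def by simp
  hence "{0..k} \<subseteq> Zm m" by (auto simp: Zm_def)
  thus ?thesis using interval_diam[OF r m] interval_superset_diam[OF r m] k_def
    unfolding rho_maximal_def by blast
qed

lemma residue_band_card:
  assumes dm: "d dvd m" and kd: "k < d"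
  shows "card {x \<in> Zm m. x mod d \<le> k} = (m div d) * (k + 1)"
proof -
  define q where "q = m div d"
  have mq: "m = d * q" using dm q_def by simp
  define f where "f = (\<lambda>(i, j). d * i + j)"
  have inj: "inj_on f ({..<q} \<times> {..k})"
  proof (rule inj_onI)
    fix x y assume x: "x \<in> {..<q} \<times> {..k}" and y: "y \<in> {..<q} \<times> {..k}" and e: "f x = f y"
    obtain i j i' j' where xy: "x = (i, j)" "y = (i', j')" by (cases x, cases y)
    have jj: "j < d" "j' < d" using x y xy kd by auto
    have e2: "d * i + j = d * i' + j'" using e xy f_def by simp
    have "j = j'" using arg_cong[OF e2, of "\<lambda>z. z mod d"] jj by simp
    moreover have "i = i'" using arg_cong[OF e2, of "\<lambda>z. z div d"] jj by simp
    ultimately show "x = y" using xy by simp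
  qed
  have "f ` ({..<q} \<times> {..k}) = {x \<in> Zm m. x mod d \<le> k}"
  proof
    show "f ` ({..<q} \<times> {..k}) \<subseteq> {x \<in> Zm m. x mod d \<le> k}"
    proof
      fix z assume "z \<in> f ` ({..<q} \<times> {..k})"
      then obtain i j where ij: "i < q" "j \<le> k" "z = d * i + j" using f_def by auto
      have "d * Suc i \<le> d * q" using ij by (intro mult_le_mono2) simp
      hence "z < m" using ij kd mq by simp
      moreover have "z mod d = j" using ij kd by simp
      ultimately show "z \<in> {x \<in> Zm m. x mod d \<le> k}" using ij by (simp add: Zm_def)
    qed
    show "{x \<in> Zm m. x mod d \<le> k} \<subseteq> f ` ({..<q} \<times> {..k})"
    proof
      fix z assume z: "z \<in> {x \<in> Zm m. x mod d \<le> k}"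
      hence zm: "z < m" and zk: "z mod d \<le> k" by (auto simp: Zm_def)
      have "z div d < q" using zm mq kd by (simp add: div_less_iff_less_mult mult.commute)
      moreover have "z = f (z div d, z mod d)" using f_def by simp
      ultimately show "z \<in> f ` ({..<q} \<times> {..k})" using zk by blast
    qed
  qed
  thus ?thesis using card_image[OF inj] q_def by simp
qed

text \<open>With k = (d - 2) div (rho - 1) for a divisor d >= rho + 1 of m, the set of
  residues x with x mod d <= k has finite diameter at least rho: all its
  (rho - 1)-fold sums have residue at most d - 2 modulo d, and it contains 1.\<close>
lemma residue_band_diam:
  assumes r: "2 \<le> \<rho>" and dm: "d dvd m" and dr: "\<rho> + 1 \<le> d" and m0: "0 < m"
  defines "A \<equiv> {x \<in> Zm m. x mod d \<le> (d - 2) div (\<rho> - 1)}"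
  shows "enat \<rho> \<le> diam m A" and "diam m A < \<infinity>"
proof -
  define h kd where "h = \<rho> - 1" and "kd = (d - 2) div (\<rho> - 1)"
  have h: "1 \<le> h" using r h_def by simp
  have d2: "2 \<le> d" using dr r by simp
  have k1: "1 \<le> kd" using h dr h_def kd_def by (simp add: less_eq_div_iff_mult_less_eq)
  have hk: "h * kd \<le> d - 2" using div_mult_mod_eq[of "d - 2" h] h_def kd_def by (simp add: mult.commute)
  have sub: "sumset_rho m A r \<subseteq> {x. x mod d \<le> r * kd}" for r
  proof (induction r)
    case 0 thus ?case by simp
  next
    case (Suc r)
    show ?case
    proof
      fix z assume "z \<in> sumset_rho m A (Suc r)"
      then obtain x a where xa: "z = (x + a) mod m" "x \<in> sumset_rho m A r" "a \<in> insert 0 A" by auto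
      have xr: "x mod d \<le> r * kd" using xa(2) Suc by blast
      have ak: "a mod d \<le> kd" using xa(3) A_def kd_def by auto
      have "z mod d = (x mod d + a mod d) mod d" using xa(1) dm by (simp add: mod_mod_cancel mod_add_eq)
      also have "\<dots> \<le> x mod d + a mod d" by (rule mod_less_eq_dividend)
      finally show "z \<in> {x. x mod d \<le> Suc r * kd}" using xr ak by simp
    qed
  qed
  have "(d - 1) mod d = d - 1" using d2 by simp
  hence "d - 1 \<notin> sumset_rho m A h" using sub[of h] hk d2 by (auto simp: mult.commute)
  moreover have "d - 1 \<in> Zm m" using dvd_imp_le[OF dm m0] d2 by (simp add: Zm_def)
  ultimately have "sumset_rho m A h \<noteq> Zm m" by blast
  thus "enat \<rho> \<le> diam m A" using diam_ge_iff[OF m0, of \<rho> A] r h_def by simp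
  have "1 \<in> A" using A_def d2 k1 dvd_imp_le[OF dm m0] kd_def by (simp add: Zm_def)
  moreover have "A \<subseteq> Zm m" using A_def by blast
  moreover have "1 < m" using dvd_imp_le[OF dm m0] d2 by linarith
  ultimately show "diam m A < \<infinity>" using one_fin_diam by blast
qed

section \<open>The values of t_rho and s_rho\<close>

lemma Max_insert_zero_eqI:
  fixes S :: "nat set"
  assumes M: "M \<in> S" and ub: "\<And>y. y \<in> S \<Longrightarrow> y \<le> M"
  shows "Max (insert 0 S) = M"
proof -
  have "finite S" using ub by (meson finite_atMost finite_subset subsetI atMost_iff)
  thus ?thesis using M ub by (intro Max_eqI) auto
qed

lemma t_rho_value:
  assumes r: "2 \<le> \<rho>" and m: "\<rho> + 1 \<le> m"
  shows "t_rho \<rho> m = (m - 2) div (\<rho> - 1) + 1"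
  unfolding t_rho_def
proof (rule Max_insert_zero_eqI)
  define k where "k = (m - 2) div (\<rho> - 1)"
  have k1: "1 \<le> k" and km: "k + 2 \<le> m"
    using interval_length(1,4)[of "\<rho> - 1" m] r m k_def by simp_all
  have "{0..k} \<subseteq> Zm m" using km by (auto simp: Zm_def)
  moreover note interval_aperiodic[OF km] interval_rho_maximal[OF r m, folded k_def]
    interval_generates[OF k1] km
  ultimately show "(m - 2) div (\<rho> - 1) + 1
      \<in> {card A | A. A \<subseteq> Zm m \<and> aperiodic m A \<and> rho_maximal m \<rho> A \<and> generates m A}"
    using k_def by (intro CollectI exI[of _ "{0..k}"]) simp
  show "y \<le> (m - 2) div (\<rho> - 1) + 1"
    if "y \<in> {card A | A. A \<subseteq> Zm m \<and> aperiodic m A \<and> rho_maximal m \<rho> A \<and> generates m A}" for y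
    using that t_upper[OF _ r] m by auto
qed

lemma s_rho_value:
  assumes r: "2 \<le> \<rho>" and m: "\<rho> + 1 \<le> m"
  shows "s_rho \<rho> m = Max {(m div d) * ((d - 2) div (\<rho> - 1) + 1) | d. d dvd m \<and> \<rho> + 1 \<le> d}"
proof -
  have m0: "0 < m" using m by simp
  define f where "f = (\<lambda>d. (m div d) * ((d - 2) div (\<rho> - 1) + 1))"
  define DS where "DS = {(m div d) * ((d - 2) div (\<rho> - 1) + 1) | d. d dvd m \<and> \<rho> + 1 \<le> d}"
  have DSim: "DS = f ` {d. d dvd m \<and> \<rho> + 1 \<le> d}" unfolding DS_def f_def by blast
  have "{d. d dvd m \<and> \<rho> + 1 \<le> d} \<subseteq> {..m}" using dvd_imp_le[OF _ m0] by auto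
  hence fDS: "finite DS" using DSim finite_subset by blast
  have "f m \<in> DS" using DSim m by auto
  hence MDS: "Max DS \<in> DS" using Max_in[OF fDS] by blast
  then obtain d0 where d0: "d0 dvd m" "\<rho> + 1 \<le> d0" "Max DS = f d0" using DSim by auto
  have "s_rho \<rho> m = Max DS"
    unfolding s_rho_def
  proof (rule Max_insert_zero_eqI)
    let ?A = "{x \<in> Zm m. x mod d0 \<le> (d0 - 2) div (\<rho> - 1)}"
    have "(d0 - 2) div (\<rho> - 1) \<le> d0 - 2" by (rule div_le_dividend)
    hence "(d0 - 2) div (\<rho> - 1) < d0" using d0(2) r by linarith
    hence "card ?A = f d0" using residue_band_card[OF d0(1)] f_def by simp
    thus "Max DS \<in> {card A | A. A \<subseteq> Zm m \<and> enat \<rho> \<le> diam m A \<and> diam m A < \<infinity>}"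
      using residue_band_diam[OF r d0(1) d0(2) m0] d0(3) by (intro CollectI exI[of _ ?A]) auto
    show "y \<le> Max DS"
      if y: "y \<in> {card A | A. A \<subseteq> Zm m \<and> enat \<rho> \<le> diam m A \<and> diam m A < \<infinity>}" for y
    proof -
      obtain A where A: "y = card A" "A \<subseteq> Zm m" "enat \<rho> \<le> diam m A" "diam m A < \<infinity>"
        using y by blast
      obtain d where d: "d dvd m" "\<rho> + 1 \<le> d" "card A \<le> f d"
        using s_upper[OF m0 r A(2-4)] f_def by blast
      have "f d \<in> DS" using d DSim by auto
      thus ?thesis using Max_ge[OF fDS] d(3) A(1) by fastforce
    qed
  qed
  thus ?thesis using DS_def by simp
qed

theorem theorem2p5:
  fixes m \<rho> :: nat
  assumes "2 \<le> \<rho>" and "\<rho> + 1 \<le> m"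
  shows "t_rho \<rho> m = (m - 2) div (\<rho> - 1) + 1
       \<and> s_rho \<rho> m = Max {(m div d) * ((d - 2) div (\<rho> - 1) + 1) | d. d dvd m \<and> \<rho> + 1 \<le> d}"
  using t_rho_value[OF assms] s_rho_value[OF assms] by simp

end
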